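(* Let $F(x,y)=\left(x+\frac{2y^2(-x^2+x+y^2)}{(x-1-y)(x^2-1+y-y^2)},\ \frac{y^2(x-1+y)}{(x-1-y)(x^2-1+y-y^2)}\right)$ and let $\varpi\colon\mathbb{C}^2\dashrightarrow\mathbb{C}^2$ be the birational map $$\varpi(x,y)=\left(\frac{x^2-1-xy-2y^2}{y},\ \frac{(1+x-2y)(1+x+y)}{2y}\right).$$ Then $\varpi\circ F\circ\varpi^{-1}(u,v)=\left(u^2-u-3,\ \frac{(u-1)(u+2)}{u+3}\,v\right)$. In particular $\psi(x,y)=\frac{x^2-1-xy-2y^2}{y}$ satisfies $\psi\circ F=g\circ\psi$ with $g(u)=u^2-u-3$, and $F$ has topological degree $2$ and first dynamical degree $2$.
   Context: The first dynamical degree is $\lambda_1(F)=\lim_n\deg(F^n)^{1/n}$ with $\deg$ the algebraic degree of the homogeneous extension to $\mathbb{P}^2$; the topological degree is the number of preimages of a generic point. *)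

theory Defs
  imports "HOL-Analysis.Analysis"
begin

definition F_map :: "complex \<times> complex \<Rightarrow> complex \<times> complex" where
  "F_map = (\<lambda>(x, y).
     (x + 2 * y^2 * (x - x^2 + y^2) / ((x - 1 - y) * (x^2 - 1 + y - y^2)),
      y^2 * (x - 1 + y) / ((x - 1 - y) * (x^2 - 1 + y - y^2))))"

definition F_dom :: "(complex \<times> complex) set" where
  "F_dom = {(x, y). (x - 1 - y) * (x^2 - 1 + y - y^2) \<noteq> 0}"

definition varpi :: "complex \<times> complex \<Rightarrow> complex \<times> complex" where
  "varpi = (\<lambda>(x, y). ((x^2 - 1 - x * y - 2 * y^2) / y,
                       (1 + x - 2 * y) * (1 + x + y) / (2 * y)))"

definition varpi_inv :: "complex \<times> complex \<Rightarrow> complex \<times> complex" where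
  "varpi_inv = (\<lambda>(u, v).
     let y = 8 * v / ((2 * v - u - 3) * (2 * v - u + 3))
     in ((2 * v - u + 1) / 2 * y - 1, y))"

definition G_map :: "complex \<times> complex \<Rightarrow> complex \<times> complex" where
  "G_map = (\<lambda>(u, v). (u^2 - u - 3, (u - 1) * (u + 2) / (u + 3) * v))"

definition psi :: "complex \<times> complex \<Rightarrow> complex" where
  "psi = (\<lambda>(x, y). (x^2 - 1 - x * y - 2 * y^2) / y)"

definition g_map :: "complex \<Rightarrow> complex" where
  "g_map u = u^2 - u - 3"

definition holds_generically :: "('a::topological_space \<Rightarrow> bool) \<Rightarrow> bool" where
  "holds_generically P \<longleftrightarrow> (\<exists>U. open U \<and> closure U = UNIV \<and> (\<forall>p\<in>U. P p))"

definition hom_eval :: "nat \<Rightarrow> (nat \<times> nat \<Rightarrow> complex) \<Rightarrow> complex \<Rightarrow> complex \<Rightarrow> complex \<Rightarrow> complex" where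
  "hom_eval d c X Y Z =
     (\<Sum>ij\<in>{(i, j). i + j \<le> d}. c ij * X ^ fst ij * Y ^ snd ij * Z ^ (d - fst ij - snd ij))"

text \<open>Algebraic degree of (the homogeneous extension to P^2 of) a rational map of C^2:
  the least d such that f = [F_X : F_Y : F_Z] with homogeneous F_X, F_Y, F_Z of degree d,
  in the affine chart Z = 1, (x,y) = [x:y:1].  Minimality removes common factors.\<close>
definition alg_deg :: "(complex \<times> complex \<Rightarrow> complex \<times> complex) \<Rightarrow> nat" where
  "alg_deg f = (LEAST d. \<exists>cX cY cZ. holds_generically (\<lambda>(x, y).
       hom_eval d cZ x y 1 \<noteq> 0 \<and>
       f (x, y) = (hom_eval d cX x y 1 / hom_eval d cZ x y 1,
                   hom_eval d cY x y 1 / hom_eval d cZ x y 1)))"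

end

theory Submission
  imports Defs "HOL-Computational_Algebra.Polynomial"
begin

text \<open>The coordinates (u, v) = varpi (x, y) turn F into the skew product
  G (u, v) = (g u, G_coeff u * v) over g u = u^2 - u - 3, with G_coeff u = (u - 1)(u + 2)/(u + 3).
  Over a generic point (U, V) the only G-preimages are the points (r, V / G_coeff r) for the two
  roots r of g r = U, so F has topological degree 2.

  Iterating, F^n = varpi_inv o G^n o varpi, and the first coordinate of G^n o varpi is
  g^n o psi = Phi n / y^(2^n) with Phi n a polynomial of degree O(2^n); clearing denominators
  shows deg F^n = O(2^n).  Conversely Phi n (x, 0) = (x^2 - 1)^(2^n), so on a generic vertical
  line psi o F^n has a pole of order 2^n at y = 0, while a representation of F^n by homogeneous
  polynomials of degree d writes psi o F^n with a denominator of degree at most 2 d.  Hence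
  2^(n - 1) <= deg F^n <= 2^(n + 6), and deg (F^n)^(1/n) tends to 2.\<close>

section \<open>Properties holding on a dense open set\<close>

lemma holds_generically_mono:
  assumes "holds_generically P" "\<And>p. P p \<Longrightarrow> Q p"
  shows "holds_generically Q"
  using assms unfolding holds_generically_def by blast

lemma holds_generically_conj:
  assumes "holds_generically P" "holds_generically Q"
  shows "holds_generically (\<lambda>p. P p \<and> Q p)"
proof -
  obtain U where U: "open U" "closure U = UNIV" "\<forall>p\<in>U. P p"
    using assms(1) unfolding holds_generically_def by blast
  obtain V where V: "open V" "closure V = UNIV" "\<forall>p\<in>V. Q p"
    using assms(2) unfolding holds_generically_def by blast
  have "closure (U \<inter> V) = UNIV"
    using open_Int_closure_subset[OF U(1), of V] V(2) U(2)
    by (metis closure_closure closure_mono inf_top.right_neutral subset_antisym top_greatest)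
  thus ?thesis unfolding holds_generically_def using U V by (intro exI[of _ "U \<inter> V"]) auto
qed

lemma closure_eq_UNIV_iff_meets_open:
  fixes S :: "'a::topological_space set"
  shows "closure S = UNIV \<longleftrightarrow> (\<forall>T. open T \<longrightarrow> T \<noteq> {} \<longrightarrow> T \<inter> S \<noteq> {})"
  using dense_intersects_open[of euclidean S] by (auto simp: euclidean_closure_of)

lemma exists_not_in_finite_near:
  fixes a :: complex
  assumes "finite X" "r > 0"
  shows "\<exists>a'. a' \<notin> X \<and> dist a' a < r"
proof -
  define f where "f = (\<lambda>t::real. a + of_real t)"
  have inj: "inj f" unfolding f_def inj_def by simp
  have "infinite (f ` {0<..<r})" using inj assms(2)
    by (simp add: finite_image_iff inj_on_subset[OF inj])
  then obtain z where z: "z \<in> f ` {0<..<r}" "z \<notin> X"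
    using assms(1) by (meson finite_subset subsetI)
  then obtain t where t: "t \<in> {0<..<r}" "z = f t" by auto
  have "dist z a = t" using t unfolding f_def by (simp add: dist_norm)
  thus ?thesis using z t by auto
qed

lemma closure_eq_UNIV_if_finite_fibres:
  fixes S :: "(complex \<times> complex) set"
  assumes "finite B" "\<And>a. a \<notin> B \<Longrightarrow> finite {b. (a, b) \<notin> S}"
  shows "closure S = UNIV"
proof (rule set_eqI, simp add: closure_approachable, intro allI impI)
  fix z :: "complex \<times> complex" and e :: real
  assume e: "e > 0"
  obtain a b where z: "z = (a, b)" by fastforce
  obtain a' where a': "a' \<notin> B" "dist a' a < e / 2"
    using exists_not_in_finite_near[OF assms(1), of "e / 2" a] e by auto
  obtain b' where b': "(a', b') \<in> S" "dist b' b < e / 2"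
    using exists_not_in_finite_near[OF assms(2)[OF a'(1)], of "e / 2" b] e by auto
  have "dist (a', b') (a, b) \<le> dist a' a + dist b' b"
    by (simp add: dist_Pair_Pair sqrt_sum_squares_le_sum)
  thus "\<exists>y\<in>S. dist y z < e" using a' b' z by (intro bexI[of _ "(a', b')"]) auto
qed

lemma holds_genericallyI:
  fixes S :: "(complex \<times> complex) set"
  assumes "open S" "finite B" "\<And>a. a \<notin> B \<Longrightarrow> finite {b. (a, b) \<notin> S}"
    and "\<And>p. p \<in> S \<Longrightarrow> P p"
  shows "holds_generically P"
  unfolding holds_generically_def
  using assms closure_eq_UNIV_if_finite_fibres[OF assms(2,3)] by blast

lemma finite_roots_affine:
  fixes f :: "complex \<Rightarrow> complex"
  assumes "\<And>v. f v = c * v + d" "c \<noteq> 0"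
  shows "finite {v. f v = 0}"
proof -
  have "{v. f v = 0} \<subseteq> {- d / c}" using assms by (auto simp: field_simps add_eq_0_iff2)
  thus ?thesis using finite_subset by blast
qed

lemma finite_roots_quadratic:
  fixes f :: "complex \<Rightarrow> complex"
  assumes "\<And>v. f v = c * v^2 + b * v + d" "c \<noteq> 0"
  shows "finite {v. f v = 0}"
proof -
  have "{v. f v = 0} = {v. poly [:d, b, c:] v = 0}" using assms(1)
    by (auto simp: algebra_simps power2_eq_square)
  moreover have "[:d, b, c:] \<noteq> 0" using assms(2) by simp
  ultimately show ?thesis using poly_roots_finite[of "[:d, b, c:]"] by argo
qed

definition varpi_dom :: "(complex \<times> complex) set" where
  "varpi_dom = {(x, y). y \<noteq> 0 \<and> 1 + x - 2 * y \<noteq> 0 \<and> 1 + x + y \<noteq> 0}"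

definition varpi_inv_dom :: "(complex \<times> complex) set" where
  "varpi_inv_dom = {(u, v). v \<noteq> 0 \<and> 2 * v - u - 3 \<noteq> 0 \<and> 2 * v - u + 3 \<noteq> 0}"

lemma varpi_relations:
  fixes x y :: complex
  assumes "y \<noteq> 0" and "varpi (x, y) = (u, v)"
  shows "v * (2 * y) = (1 + x - 2 * y) * (1 + x + y)"
    and "(2 * v - u - 3) * y = 2 * (1 + x - 2 * y)"
    and "(2 * v - u + 3) * y = 2 * (1 + x + y)"
proof -
  have "u = (x\<^sup>2 - 1 - x * y - 2 * y\<^sup>2) / y" "v = (1 + x - 2 * y) * (1 + x + y) / (2 * y)"
    using assms(2) by (simp_all add: varpi_def)
  hence hu: "u * y = x\<^sup>2 - 1 - x * y - 2 * y\<^sup>2"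
    and hv: "v * (2 * y) = (1 + x - 2 * y) * (1 + x + y)" using assms(1) by simp_all
  show "v * (2 * y) = (1 + x - 2 * y) * (1 + x + y)" by (fact hv)
  show "(2 * v - u - 3) * y = 2 * (1 + x - 2 * y)" "(2 * v - u + 3) * y = 2 * (1 + x + y)"
    using hu hv by algebra+
qed

lemma varpi_in_varpi_inv_dom:
  assumes "p \<in> varpi_dom"
  shows "varpi p \<in> varpi_inv_dom"
proof -
  obtain x y u v where p: "p = (x, y)" and w: "varpi (x, y) = (u, v)" by (metis surj_pair)
  have y: "y \<noteq> 0" "1 + x - 2 * y \<noteq> 0" "1 + x + y \<noteq> 0" using assms p by (auto simp: varpi_dom_def)
  note r = varpi_relations[OF y(1) w]
  have "v \<noteq> 0" using r(1) y by auto
  moreover have "2 * v - u - 3 \<noteq> 0" using r(2) y(2) by (metis mult_eq_0_iff zero_neq_numeral)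
  moreover have "2 * v - u + 3 \<noteq> 0" using r(3) y(3) by (metis mult_eq_0_iff zero_neq_numeral)
  ultimately show ?thesis using p w by (simp add: varpi_inv_dom_def)
qed

lemma varpi_inv_varpi:
  assumes "p \<in> varpi_dom"
  shows "varpi_inv (varpi p) = p"
proof -
  obtain x y u v where p: "p = (x, y)" and w: "varpi (x, y) = (u, v)" by (metis surj_pair)
  have y: "y \<noteq> 0" using assms p by (auto simp: varpi_dom_def)
  have D: "(2 * v - u - 3) * (2 * v - u + 3) \<noteq> 0"
    using varpi_in_varpi_inv_dom[OF assms] p w by (simp add: varpi_inv_dom_def)
  note r = varpi_relations[OF y w]
  have "8 * v * (y * y) = y * ((2 * v - u - 3) * (2 * v - u + 3)) * (y * y)"
    using r by algebra
  hence "8 * v = y * ((2 * v - u - 3) * (2 * v - u + 3))" using y by simp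
  hence eY: "8 * v / ((2 * v - u - 3) * (2 * v - u + 3)) = y" using D by simp
  have "(2 * v - u + 1) * y = 2 * x + 2" using r(3) by algebra
  hence eX: "(2 * v - u + 1) / 2 * y - 1 = x" by (simp add: field_simps)
  have "varpi_inv (u, v) = (x, y)" unfolding varpi_inv_def Let_def by (simp only: prod.case eY eX)
  thus ?thesis using p w by simp
qed

lemma varpi_inv_relations:
  assumes "(u, v) \<in> varpi_inv_dom"
  obtains x y where "varpi_inv (u, v) = (x, y)" "y \<noteq> 0"
    "y * ((2 * v - u - 3) * (2 * v - u + 3)) = 8 * v" "2 * x = (2 * v - u + 1) * y - 2"
proof
  define y where "y = 8 * v / ((2 * v - u - 3) * (2 * v - u + 3))"
  define x where "x = (2 * v - u + 1) / 2 * y - 1"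
  show "varpi_inv (u, v) = (x, y)" unfolding varpi_inv_def y_def x_def Let_def by simp
  show "y \<noteq> 0" "y * ((2 * v - u - 3) * (2 * v - u + 3)) = 8 * v"
    using assms unfolding y_def varpi_inv_dom_def by simp_all
  show "2 * x = (2 * v - u + 1) * y - 2" unfolding x_def by (simp add: field_simps)
qed

lemma varpi_varpi_inv:
  assumes "w \<in> varpi_inv_dom"
  shows "varpi (varpi_inv w) = w"
proof -
  obtain u v where w: "w = (u, v)" by fastforce
  obtain x y where q: "varpi_inv (u, v) = (x, y)" "y \<noteq> 0"
    and hy: "y * ((2 * v - u - 3) * (2 * v - u + 3)) = 8 * v" and hx: "2 * x = (2 * v - u + 1) * y - 2"
    using varpi_inv_relations assms w by metis
  have "x\<^sup>2 - 1 - x * y - 2 * y\<^sup>2 = u * y" "(1 + x - 2 * y) * (1 + x + y) = 2 * y * v"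
    using hy hx by algebra+
  thus ?thesis using q w by (simp add: varpi_def field_simps)
qed

lemma varpi_inv_in_varpi_dom:
  assumes "w \<in> varpi_inv_dom"
  shows "varpi_inv w \<in> varpi_dom"
proof -
  obtain u v where w: "w = (u, v)" by fastforce
  obtain x y where q: "varpi_inv (u, v) = (x, y)" "y \<noteq> 0"
    and hx: "2 * x = (2 * v - u + 1) * y - 2"
    using varpi_inv_relations assms w by metis
  have "2 * (1 + x - 2 * y) = y * (2 * v - u - 3)" "2 * (1 + x + y) = y * (2 * v - u + 3)"
    using hx by algebra+
  moreover have "y * (2 * v - u - 3) \<noteq> 0" "y * (2 * v - u + 3) \<noteq> 0"
    using q(2) assms w by (auto simp: varpi_inv_dom_def)
  ultimately have "1 + x - 2 * y \<noteq> 0" "1 + x + y \<noteq> 0" by (metis mult_zero_right)+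
  thus ?thesis using q w by (simp add: varpi_dom_def)
qed

lemma open_varpi_dom: "open varpi_dom"
proof -
  have eq: "varpi_dom = {p. snd p \<noteq> 0} \<inter> {p. 1 + fst p - 2 * snd p \<noteq> 0} \<inter> {p. 1 + fst p + snd p \<noteq> 0}"
    unfolding varpi_dom_def by auto
  show ?thesis unfolding eq by (intro open_Int open_Collect_neq continuous_intros)
qed

lemma open_varpi_inv_dom: "open varpi_inv_dom"
proof -
  have eq: "varpi_inv_dom = {p. snd p \<noteq> 0} \<inter> {p. 2 * snd p - fst p - 3 \<noteq> 0} \<inter> {p. 2 * snd p - fst p + 3 \<noteq> 0}"
    unfolding varpi_inv_dom_def by auto
  show ?thesis unfolding eq by (intro open_Int open_Collect_neq continuous_intros)
qed

lemma finite_fibres_varpi_dom: "finite {b. (a, b) \<notin> varpi_dom}"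
proof -
  have "{b. (a, b) \<notin> varpi_dom} = {0} \<union> {b. 1 + a - 2 * b = 0} \<union> {b. 1 + a + b = 0}"
    unfolding varpi_dom_def by auto
  moreover have "finite {b. 1 + a - 2 * b = 0}"
    by (rule finite_roots_affine[where c = "-2" and d = "1 + a"]) simp_all
  moreover have "finite {b. 1 + a + b = 0}"
    by (rule finite_roots_affine[where c = 1 and d = "1 + a"]) (simp_all add: algebra_simps)
  ultimately show ?thesis by simp
qed

lemma finite_fibres_varpi_inv_dom: "finite {b. (a, b) \<notin> varpi_inv_dom}"
proof -
  have "{b. (a, b) \<notin> varpi_inv_dom} = {0} \<union> {b. 2 * b - a - 3 = 0} \<union> {b. 2 * b - a + 3 = 0}"
    unfolding varpi_inv_dom_def by auto
  moreover have "finite {b. 2 * b - a - 3 = 0}"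
    by (rule finite_roots_affine[where c = 2 and d = "- a - 3"]) (simp_all add: algebra_simps)
  moreover have "finite {b. 2 * b - a + 3 = 0}"
    by (rule finite_roots_affine[where c = 2 and d = "3 - a"]) (simp_all add: algebra_simps)
  ultimately show ?thesis by simp
qed

lemma dense_varpi_dom: "closure varpi_dom = UNIV"
  by (rule closure_eq_UNIV_if_finite_fibres[of "{}"]) (simp_all add: finite_fibres_varpi_dom)

lemma dense_varpi_inv_dom: "closure varpi_inv_dom = UNIV"
  by (rule closure_eq_UNIV_if_finite_fibres[of "{}"]) (simp_all add: finite_fibres_varpi_inv_dom)

lemma continuous_on_varpi: "continuous_on varpi_dom varpi"
proof -
  have eq: "varpi = (\<lambda>p. ((fst p ^ 2 - 1 - fst p * snd p - 2 * snd p ^ 2) / snd p,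
                       (1 + fst p - 2 * snd p) * (1 + fst p + snd p) / (2 * snd p)))"
    unfolding varpi_def by (auto simp: fun_eq_iff)
  show ?thesis unfolding eq by (intro continuous_intros) (auto simp: varpi_dom_def)
qed

lemma continuous_on_varpi_inv: "continuous_on varpi_inv_dom varpi_inv"
proof -
  have eq: "varpi_inv = (\<lambda>p. ((2 * snd p - fst p + 1) / 2 *
      (8 * snd p / ((2 * snd p - fst p - 3) * (2 * snd p - fst p + 3))) - 1,
      8 * snd p / ((2 * snd p - fst p - 3) * (2 * snd p - fst p + 3))))"
    unfolding varpi_inv_def Let_def by (auto simp: fun_eq_iff)
  show ?thesis unfolding eq by (intro continuous_intros) (auto simp: varpi_inv_dom_def)
qed

text \<open>varpi restricts to a homeomorphism between the dense open sets varpi_dom and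
  varpi_inv_dom, so generic properties pull back along it.\<close>

lemma holds_generically_pullback_varpi:
  assumes "holds_generically Q"
  shows "holds_generically (\<lambda>p. p \<in> varpi_dom \<and> Q (varpi p))"
proof -
  obtain U where U: "open U" "closure U = UNIV" "\<forall>w\<in>U. Q w"
    using assms unfolding holds_generically_def by blast
  define U' where "U' = varpi -` U \<inter> varpi_dom"
  have "open U'" unfolding U'_def
    using continuous_on_varpi open_varpi_dom U(1) continuous_on_open_vimage by blast
  moreover have "closure U' = UNIV" unfolding closure_eq_UNIV_iff_meets_open
  proof (intro allI impI)
    fix T :: "(complex \<times> complex) set" assume T: "open T" "T \<noteq> {}"
    then obtain p where p: "p \<in> T" "p \<in> varpi_dom"
      using dense_varpi_dom unfolding closure_eq_UNIV_iff_meets_open by blast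
    define T' where "T' = varpi_inv -` (T \<inter> varpi_dom) \<inter> varpi_inv_dom"
    have "open T'" unfolding T'_def
      using continuous_on_varpi_inv open_varpi_inv_dom T(1) open_varpi_dom continuous_on_open_vimage
      by (meson open_Int)
    moreover have "varpi p \<in> T'"
      unfolding T'_def using p varpi_in_varpi_inv_dom varpi_inv_varpi by simp
    ultimately obtain w where w: "w \<in> T'" "w \<in> U"
      using U(2) unfolding closure_eq_UNIV_iff_meets_open by blast
    hence "varpi_inv w \<in> T \<inter> U'"
      unfolding T'_def U'_def by (auto simp: varpi_varpi_inv)
    thus "T \<inter> U' \<noteq> {}" by blast
  qed
  ultimately show ?thesis unfolding holds_generically_def using U(3)
    by (intro exI[of _ U']) (auto simp: U'_def)
qed

section \<open>varpi conjugates F to a skew product over g\<close>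

definition G_coeff :: "complex \<Rightarrow> complex" where
  "G_coeff u = (u - 1) * (u + 2) / (u + 3)"

lemma G_map_eq: "G_map (u, v) = (g_map u, G_coeff u * v)"
  by (simp add: G_map_def g_map_def G_coeff_def)

lemma G_coeff_frac:
  fixes P Y :: complex
  assumes "Y \<noteq> 0" and "P + 3 * Y \<noteq> 0"
  shows "G_coeff (P / Y) = ((P - Y) * (P + 2 * Y)) / (Y * (P + 3 * Y))"
proof -
  have h: "P / Y - 1 = (P - Y) / Y" "P / Y + 2 = (P + 2 * Y) / Y" "P / Y + 3 = (P + 3 * Y) / Y"
    using assms(1) by (simp_all add: field_simps)
  show ?thesis unfolding G_coeff_def h times_divide_times_eq divide_divide_times_eq
  proof (subst frac_eq_eq)
    show "Y * Y * (P + 3 * Y) \<noteq> 0" "Y * (P + 3 * Y) \<noteq> 0" using assms by simp_all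
  qed algebra
qed

lemma psi_eq_fst_varpi: "psi p = fst (varpi p)"
  by (cases p) (simp add: psi_def varpi_def)

lemma mem_varpi_dom_iff:
  assumes "y \<noteq> 0"
  shows "(x, y) \<in> varpi_dom \<longleftrightarrow> snd (varpi (x, y)) \<noteq> 0"
  using assms by (simp add: varpi_dom_def varpi_def)

lemma F_map_frac:
  fixes x y :: complex
  defines "d \<equiv> (x - 1 - y) * (x\<^sup>2 - 1 + y - y\<^sup>2)"
  assumes "d \<noteq> 0"
  shows "F_map (x, y) = ((x * d + 2 * y\<^sup>2 * (x - x\<^sup>2 + y\<^sup>2)) / d, y\<^sup>2 * (x - 1 + y) / d)"
  using assms unfolding F_map_def by (simp add: field_simps)

lemma fst_varpi_F_map:
  fixes x y :: complex
  assumes "y \<noteq> 0" "x - 1 + y \<noteq> 0" "(x - 1 - y) * (x\<^sup>2 - 1 + y - y\<^sup>2) \<noteq> 0"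
  shows "fst (varpi (F_map (x, y))) = g_map (fst (varpi (x, y)))"
proof -
  define d where "d = (x - 1 - y) * (x\<^sup>2 - 1 + y - y\<^sup>2)"
  define P where "P = x * d + 2 * y\<^sup>2 * (x - x\<^sup>2 + y\<^sup>2)"
  define Q where "Q = y\<^sup>2 * (x - 1 + y)"
  define N where "N = x\<^sup>2 - 1 - x * y - 2 * y\<^sup>2"
  have d: "d \<noteq> 0" and Q: "Q \<noteq> 0" using assms unfolding d_def Q_def by simp_all
  have key: "(P\<^sup>2 - d\<^sup>2 - P * Q - 2 * Q\<^sup>2) * y\<^sup>2 = Q * d * (N\<^sup>2 - N * y - 3 * y\<^sup>2)"
    unfolding P_def Q_def d_def N_def by algebra
  have "fst (varpi (P / d, Q / d)) = (P\<^sup>2 - d\<^sup>2 - P * Q - 2 * Q\<^sup>2) / (Q * d)"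
    unfolding varpi_def using d Q by (simp add: field_simps power2_eq_square)
  also have "\<dots> = (N\<^sup>2 - N * y - 3 * y\<^sup>2) / y\<^sup>2"
    using key d Q assms(1) by (simp add: field_simps)
  also have "\<dots> = g_map (N / y)"
    unfolding g_map_def using assms(1) by (simp add: field_simps power2_eq_square)
  finally show ?thesis
    using F_map_frac[OF assms(3)] by (simp add: varpi_def P_def Q_def d_def N_def)
qed

lemma snd_varpi_F_map:
  fixes x y :: complex
  assumes "y \<noteq> 0" "x - 1 + y \<noteq> 0" "(x - 1 - y) * (x\<^sup>2 - 1 + y - y\<^sup>2) \<noteq> 0"
    and "fst (varpi (x, y)) + 3 \<noteq> 0"
  shows "snd (varpi (F_map (x, y))) = G_coeff (fst (varpi (x, y))) * snd (varpi (x, y))"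
proof -
  define d where "d = (x - 1 - y) * (x\<^sup>2 - 1 + y - y\<^sup>2)"
  define P where "P = x * d + 2 * y\<^sup>2 * (x - x\<^sup>2 + y\<^sup>2)"
  define Q where "Q = y\<^sup>2 * (x - 1 + y)"
  define N where "N = x\<^sup>2 - 1 - x * y - 2 * y\<^sup>2"
  define M where "M = (1 + x - 2 * y) * (1 + x + y)"
  have d: "d \<noteq> 0" and Q: "Q \<noteq> 0" using assms unfolding d_def Q_def by simp_all
  have N3: "N + 3 * y \<noteq> 0"
    using assms(1,4) unfolding varpi_def N_def by (simp add: field_simps)
  have key: "(d + P - 2 * Q) * (d + P + Q) * (2 * y\<^sup>2 * (N + 3 * y)) = (N - y) * (N + 2 * y) * M * (2 * Q * d)"
    unfolding P_def Q_def d_def N_def M_def by algebra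
  have "snd (varpi (P / d, Q / d)) = (d + P - 2 * Q) * (d + P + Q) / (2 * Q * d)"
    unfolding varpi_def using d Q by (simp add: field_simps power2_eq_square)
  also have "\<dots> = (N - y) * (N + 2 * y) * M / (2 * y\<^sup>2 * (N + 3 * y))"
    using key d Q assms(1) N3 by (simp add: frac_eq_eq)
  also have "\<dots> = ((N - y) * (N + 2 * y)) / (y * (N + 3 * y)) * (M / (2 * y))"
    by (simp add: power2_eq_square mult_ac)
  also have "\<dots> = G_coeff (N / y) * (M / (2 * y))"
    using G_coeff_frac[OF assms(1) N3] by simp
  finally show ?thesis
    using F_map_frac[OF assms(3)] by (simp add: varpi_def P_def Q_def d_def N_def M_def)
qed

text \<open>Each condition defining conj_dom removes a vertical line or the graph of a function of u,
  so conj_dom is dense.\<close>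

definition conj_dom :: "(complex \<times> complex) set" where
  "conj_dom = {(u, v). u \<noteq> 1 \<and> u \<noteq> -2 \<and> u \<noteq> -3 \<and> v \<noteq> 0
     \<and> 2 * v - u - 3 \<noteq> 0 \<and> 2 * v - u + 3 \<noteq> 0
     \<and> (2 * v - u) * (u - 1) - u + 9 \<noteq> 0 \<and> (2 * v - u) * (u + 2) - u \<noteq> 0
     \<and> 2 * (u - 1) * (u + 2) * v - (g_map u + 3) * (u + 3) \<noteq> 0
     \<and> 2 * (u - 1) * (u + 2) * v - (g_map u - 3) * (u + 3) \<noteq> 0}"

lemma conj_dom_subset: "conj_dom \<subseteq> varpi_inv_dom"
  by (auto simp: conj_dom_def varpi_inv_dom_def)

lemma fst_conj_dom: "w \<in> conj_dom \<Longrightarrow> fst w \<notin> {1, -2, -3}"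
  by (auto simp: conj_dom_def)

lemma finite_fibres_conj_dom:
  assumes a: "a \<notin> {1, -2, -3}"
  shows "finite {b. (a, b) \<notin> conj_dom}"
proof -
  have a0: "a - 1 \<noteq> 0" "a + 2 \<noteq> 0" "a + 3 \<noteq> 0" using a by (auto simp: add_eq_0_iff2)
  have fin: "finite {b. c * b + d = 0}" if "c \<noteq> 0" for c d :: complex
    by (rule finite_roots_affine[OF _ that]) simp
  have nz: "2 * (a - 1) \<noteq> 0" "2 * (a + 2) \<noteq> 0" "2 * (a - 1) * (a + 2) \<noteq> 0"
    using a0 by (simp_all only: mult_eq_0_iff zero_neq_numeral) simp_all
  have sub: "{b. (a, b) \<notin> conj_dom} \<subseteq> {b. (a, b) \<notin> varpi_inv_dom}
     \<union> {b. (2 * (a - 1)) * b + (- a * (a - 1) - a + 9) = 0}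
     \<union> {b. (2 * (a + 2)) * b + (- a * (a + 2) - a) = 0}
     \<union> {b. (2 * (a - 1) * (a + 2)) * b + (- (g_map a + 3) * (a + 3)) = 0}
     \<union> {b. (2 * (a - 1) * (a + 2)) * b + (- (g_map a - 3) * (a + 3)) = 0}"
    using a unfolding conj_dom_def varpi_inv_dom_def by (auto simp: algebra_simps)
  show ?thesis
    by (rule finite_subset[OF sub]) (intro finite_UnI finite_fibres_varpi_inv_dom fin nz)
qed

lemma open_conj_dom: "open conj_dom"
proof -
  have eq: "conj_dom = {p. fst p \<noteq> 1} \<inter> {p. fst p \<noteq> -2} \<inter> {p. fst p \<noteq> -3} \<inter> {p. snd p \<noteq> 0} \<inter>
      {p. 2 * snd p - fst p - 3 \<noteq> 0} \<inter> {p. 2 * snd p - fst p + 3 \<noteq> 0} \<inter>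
      {p. (2 * snd p - fst p) * (fst p - 1) - fst p + 9 \<noteq> 0} \<inter> {p. (2 * snd p - fst p) * (fst p + 2) - fst p \<noteq> 0} \<inter>
      {p. 2 * (fst p - 1) * (fst p + 2) * snd p - (g_map (fst p) + 3) * (fst p + 3) \<noteq> 0} \<inter>
      {p. 2 * (fst p - 1) * (fst p + 2) * snd p - (g_map (fst p) - 3) * (fst p + 3) \<noteq> 0}"
    unfolding conj_dom_def by auto
  show ?thesis unfolding eq g_map_def by (intro open_Int open_Collect_neq continuous_intros)
qed

lemma G_map_in_varpi_inv_dom:
  assumes "w \<in> conj_dom"
  shows "G_map w \<in> varpi_inv_dom"
proof -
  obtain u v where w: "w = (u, v)" by fastforce
  have R: "u \<noteq> -3" "2 * (u - 1) * (u + 2) * v - (g_map u + 3) * (u + 3) \<noteq> 0"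
     "2 * (u - 1) * (u + 2) * v - (g_map u - 3) * (u + 3) \<noteq> 0"
    using assms w unfolding conj_dom_def by auto
  have u3: "u + 3 \<noteq> 0" using R(1) by (simp add: add_eq_0_iff2)
  have e: "2 * (G_coeff u * v) - g_map u - 3 = (2 * (u - 1) * (u + 2) * v - (g_map u + 3) * (u + 3)) / (u + 3)"
    "2 * (G_coeff u * v) - g_map u + 3 = (2 * (u - 1) * (u + 2) * v - (g_map u - 3) * (u + 3)) / (u + 3)"
    using u3 by (simp_all add: G_coeff_def field_simps)
  have "2 * (G_coeff u * v) - g_map u - 3 \<noteq> 0" "2 * (G_coeff u * v) - g_map u + 3 \<noteq> 0"
    unfolding e using R(2,3) u3 by simp_all
  moreover have "G_coeff u * v \<noteq> 0" using assms w by (auto simp: conj_dom_def G_coeff_def add_eq_0_iff2)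
  ultimately show ?thesis using w by (simp add: varpi_inv_dom_def G_map_eq)
qed

lemma F_map_varpi_inv:
  assumes "w \<in> conj_dom"
  shows "varpi_inv w \<in> F_dom" and "F_map (varpi_inv w) = varpi_inv (G_map w)"
proof -
  obtain u v where w: "w = (u, v)" by fastforce
  have u3: "u + 3 \<noteq> 0" and R: "(2 * v - u) * (u - 1) - u + 9 \<noteq> 0" "(2 * v - u) * (u + 2) - u \<noteq> 0"
    using assms w unfolding conj_dom_def by (auto simp: add_eq_0_iff2)
  have "(u, v) \<in> varpi_inv_dom" using assms w conj_dom_subset by blast
  then obtain x y where q: "varpi_inv (u, v) = (x, y)" "y \<noteq> 0"
    and hy: "y * ((2 * v - u - 3) * (2 * v - u + 3)) = 8 * v" and hx: "2 * x = (2 * v - u + 1) * y - 2"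
    by (rule varpi_inv_relations)
  have vq: "varpi (x, y) = (u, v)" using varpi_varpi_inv[OF \<open>(u, v) \<in> varpi_inv_dom\<close>] q by simp
  have "(x - 1 - y) * ((2 * v - u - 3) * (2 * v - u + 3)) = 2 * ((2 * v - u) * (u - 1) - u + 9)"
    using hy hx by algebra
  hence D1: "x - 1 - y \<noteq> 0" using R(1) by (metis mult_eq_0_iff mult_zero_left zero_neq_numeral)
  have "(x\<^sup>2 - 1 + y - y\<^sup>2) * (2 * v - u - 3) = y * ((2 * v - u) * (u + 2) - u)"
    using hy hx by algebra
  hence D2: "x\<^sup>2 - 1 + y - y\<^sup>2 \<noteq> 0" using R(2) q(2) by auto
  have "(x - 1 + y) * (2 * v - u - 3) = 2 * (u + 3)" using hy hx by algebra
  hence E: "x - 1 + y \<noteq> 0" using u3 by (metis mult_eq_0_iff mult_zero_left zero_neq_numeral)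
  have D: "(x - 1 - y) * (x\<^sup>2 - 1 + y - y\<^sup>2) \<noteq> 0" using D1 D2 by simp
  have vF: "varpi (F_map (x, y)) = G_map (u, v)"
    using fst_varpi_F_map[OF q(2) E D] snd_varpi_F_map[OF q(2) E D] vq u3
    by (simp add: G_map_eq prod_eq_iff)
  have G: "G_map w \<in> varpi_inv_dom" by (rule G_map_in_varpi_inv_dom[OF assms])
  obtain x' y' where Fq: "F_map (x, y) = (x', y')" by fastforce
  have "y' \<noteq> 0" using Fq F_map_frac[OF D] q(2) E D by auto
  moreover have "snd (varpi (x', y')) \<noteq> 0" using vF Fq G w by (auto simp: varpi_inv_dom_def split: prod.splits)
  ultimately have "F_map (x, y) \<in> varpi_dom" using Fq mem_varpi_dom_iff by simp
  thus "F_map (varpi_inv w) = varpi_inv (G_map w)" using varpi_inv_varpi vF q w by metis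
  show "varpi_inv w \<in> F_dom" using D q w by (simp add: F_dom_def)
qed

lemma varpi_F_map_varpi_inv:
  assumes "w \<in> conj_dom"
  shows "varpi (F_map (varpi_inv w)) = G_map w"
  using F_map_varpi_inv[OF assms] G_map_in_varpi_inv_dom[OF assms] varpi_varpi_inv by simp

lemma holds_generically_psi_F_map: "holds_generically (\<lambda>p. psi (F_map p) = g_map (psi p))"
proof -
  define S where "S = {p :: complex \<times> complex. snd p \<noteq> 0} \<inter> {p. fst p - 1 + snd p \<noteq> 0}
    \<inter> {p. fst p - 1 - snd p \<noteq> 0} \<inter> {p. fst p ^ 2 - 1 + snd p - snd p ^ 2 \<noteq> 0}"
  have "open S" unfolding S_def by (intro open_Int open_Collect_neq continuous_intros)
  moreover have "finite {b. (a, b) \<notin> S}" for a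
  proof -
    have "finite {b. a - 1 + b = 0}"
      by (rule finite_roots_affine[where c = 1 and d = "a - 1"]) simp_all
    moreover have "finite {b. a - 1 - b = 0}"
      by (rule finite_roots_affine[where c = "-1" and d = "a - 1"]) simp_all
    moreover have "finite {b. a ^ 2 - 1 + b - b ^ 2 = 0}"
      by (rule finite_roots_quadratic[where c = "-1" and b = 1 and d = "a ^ 2 - 1"]) auto
    ultimately show ?thesis unfolding S_def
      by (simp add: Collect_disj_eq[symmetric] Collect_neg_eq[symmetric])
  qed
  moreover have "psi (F_map p) = g_map (psi p)" if "p \<in> S" for p
    using that fst_varpi_F_map[of "snd p" "fst p"] unfolding S_def psi_eq_fst_varpi by (cases p) auto
  ultimately show ?thesis by (intro holds_genericallyI[of S "{}"]) auto
qed

section \<open>Topological degree\<close>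

lemma g_map_preimage_two:
  assumes "4 * U + 13 \<noteq> 0"
  obtains r1 r2 where "r1 \<noteq> r2" "{r. g_map r = U} = {r1, r2}"
proof
  define c where "c = csqrt (4 * U + 13)"
  have c2: "c\<^sup>2 = 4 * U + 13" unfolding c_def by simp
  have "c \<noteq> 0" using assms unfolding c_def by simp
  thus "(1 + c) / 2 \<noteq> (1 - c) / 2" by (simp add: field_simps)
  have fac: "g_map r - U = (r - (1 + c) / 2) * (r - (1 - c) / 2)" for r
  proof -
    have "4 * (g_map r - U) = 4 * ((r - (1 + c) / 2) * (r - (1 - c) / 2))"
      unfolding g_map_def using c2 by (simp add: field_simps) algebra
    thus ?thesis by (metis mult_cancel_left zero_neq_numeral)
  qed
  show "{r. g_map r = U} = {(1 + c) / 2, (1 - c) / 2}"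
    using fac by (auto simp: eq_iff_diff_eq_0[of "g_map _"])
qed

text \<open>two_to_one_dom removes the curves over which a candidate preimage (r, V / G_coeff r),
  g_map r = U, could leave conj_dom.  The point lies on 2 v - r - 3 = 0 only if
  r = (2 V - U - 1) / 2, and on 2 v - r + 3 = 0 only if exc_poly U V = 0: it is the resultant in r
  of g_map r - U and r (2 V - U + 3) - (3 - U - 6 V).\<close>

definition exc_poly :: "complex \<Rightarrow> complex \<Rightarrow> complex" where
  "exc_poly U V = (3 - U - 6 * V)\<^sup>2 - (3 - U - 6 * V) * (2 * V - U + 3) - (3 + U) * (2 * V - U + 3)\<^sup>2"

definition two_to_one_dom :: "(complex \<times> complex) set" where
  "two_to_one_dom = {(U, V). U \<noteq> 3 \<and> U \<noteq> 9 \<and> U \<noteq> -3 \<and> 4 * U + 13 \<noteq> 0 \<and> V \<noteq> 0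
      \<and> 2 * V - U - 3 \<noteq> 0 \<and> 2 * V - U + 3 \<noteq> 0 \<and> g_map ((2 * V - U - 1) / 2) - U \<noteq> 0
      \<and> exc_poly U V \<noteq> 0}"

lemma preimage_in_conj_dom:
  assumes W: "(U, V) \<in> two_to_one_dom" and r: "g_map r = U"
  shows "(r, V / G_coeff r) \<in> conj_dom"
proof -
  have W': "U \<noteq> 3" "U \<noteq> 9" "U \<noteq> -3" "V \<noteq> 0" "2 * V - U - 3 \<noteq> 0" "2 * V - U + 3 \<noteq> 0"
    "g_map ((2 * V - U - 1) / 2) - U \<noteq> 0" "exc_poly U V \<noteq> 0"
    using W unfolding two_to_one_dom_def by auto
  have r123: "r \<noteq> 1" "r \<noteq> -2" "r \<noteq> -3" using r W'(1-3) by (auto simp: g_map_def)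
  hence r0: "r - 1 \<noteq> 0" "r + 2 \<noteq> 0" "r + 3 \<noteq> 0" by (auto simp: add_eq_0_iff2)
  define v where "v = V / G_coeff r"
  have hv: "v * ((r - 1) * (r + 2)) = V * (r + 3)" unfolding v_def G_coeff_def using r0 by simp
  have hr: "r\<^sup>2 - r - 3 = U" using r unfolding g_map_def by simp
  have "v \<noteq> 0" using W'(4) r0 unfolding v_def G_coeff_def by simp
  moreover have "2 * v - r - 3 \<noteq> 0"
  proof
    assume "2 * v - r - 3 = 0"
    hence "(r + 3) * (2 * r - (2 * V - U - 1)) = 0" using hv hr by algebra
    hence "2 * r - (2 * V - U - 1) = 0" using r0(3) by (metis mult_eq_0_iff)
    hence "r = (2 * V - U - 1) / 2" by (simp add: field_simps)
    thus False using r W'(7) by (metis diff_self)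
  qed
  moreover have "2 * v - r + 3 \<noteq> 0"
  proof
    assume "2 * v - r + 3 = 0"
    hence "r * (2 * V - U + 3) = 3 - U - 6 * V" using hv hr by algebra
    hence "exc_poly U V = (2 * V - U + 3)\<^sup>2 * (r\<^sup>2 - r - 3 - U)"
      unfolding exc_poly_def by algebra
    thus False using hr W'(8) by simp
  qed
  moreover have "(r + 2) * ((2 * v - r) * (r - 1) - r + 9) = (r + 3) * (2 * V - U + 3)"
    "(r - 1) * ((2 * v - r) * (r + 2) - r) = (r + 3) * (2 * V - U - 3)"
    "2 * (r - 1) * (r + 2) * v - (U + 3) * (r + 3) = (r + 3) * (2 * V - U - 3)"
    "2 * (r - 1) * (r + 2) * v - (U - 3) * (r + 3) = (r + 3) * (2 * V - U + 3)"
    using hv hr by algebra+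
  hence "(2 * v - r) * (r - 1) - r + 9 \<noteq> 0" "(2 * v - r) * (r + 2) - r \<noteq> 0"
    "2 * (r - 1) * (r + 2) * v - (g_map r + 3) * (r + 3) \<noteq> 0"
    "2 * (r - 1) * (r + 2) * v - (g_map r - 3) * (r + 3) \<noteq> 0"
    using r r0 W'(5,6) by (metis mult_eq_0_iff mult_zero_right)+
  ultimately show ?thesis using r123 unfolding conj_dom_def v_def by simp
qed

lemma F_map_varpi_inv_preimage:
  assumes p: "p \<in> varpi_dom" and w: "varpi p = (U, V)" "(U, V) \<in> two_to_one_dom" and r: "g_map r = U"
  defines "q \<equiv> varpi_inv (r, V / G_coeff r)"
  shows "q \<in> F_dom" "F_map q = p" "fst (varpi q) = r"
proof -
  have R: "(r, V / G_coeff r) \<in> conj_dom" using preimage_in_conj_dom w r by simp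
  hence "G_coeff r \<noteq> 0" using fst_conj_dom[OF R] by (auto simp: G_coeff_def add_eq_0_iff2)
  hence "G_map (r, V / G_coeff r) = varpi p" using r w by (simp add: G_map_eq)
  thus "q \<in> F_dom" "F_map q = p"
    using F_map_varpi_inv[OF R] varpi_inv_varpi[OF p] unfolding q_def by simp_all
  show "fst (varpi q) = r" unfolding q_def using R conj_dom_subset varpi_varpi_inv by auto
qed

lemma F_map_preimage_eq_varpi_inv:
  assumes p: "p \<in> varpi_dom" and w: "varpi p = (U, V)" "(U, V) \<in> two_to_one_dom"
    and q: "q \<in> F_dom" "F_map q = p"
  obtains r where "g_map r = U" "q = varpi_inv (r, V / G_coeff r)"
proof -
  obtain x y where qxy: "q = (x, y)" by fastforce
  have D: "(x - 1 - y) * (x\<^sup>2 - 1 + y - y\<^sup>2) \<noteq> 0" using q qxy unfolding F_dom_def by auto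
  have W: "U \<noteq> 3" "U \<noteq> 9" "U \<noteq> -3" "V \<noteq> 0" using w unfolding two_to_one_dom_def by auto
  have Fq: "F_map (x, y) = p" using q qxy by simp
  have "snd p \<noteq> 0" using p unfolding varpi_dom_def by auto
  moreover have "snd p = y\<^sup>2 * (x - 1 + y) / ((x - 1 - y) * (x\<^sup>2 - 1 + y - y\<^sup>2))"
    unfolding Fq[symmetric] F_map_frac[OF D] by simp
  ultimately have y: "y \<noteq> 0" and E: "x - 1 + y \<noteq> 0" by auto
  obtain u v where uv: "varpi (x, y) = (u, v)" by fastforce
  have gu: "g_map u = U" using fst_varpi_F_map[OF y E D] Fq w uv by simp
  hence "u \<noteq> 1" "u \<noteq> -2" "u \<noteq> -3" using W(1-3) by (auto simp: g_map_def)
  hence Gu: "G_coeff u \<noteq> 0" and u3: "u + 3 \<noteq> 0" by (auto simp: G_coeff_def add_eq_0_iff2)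
  have "V = G_coeff u * v" using snd_varpi_F_map[OF y E D] Fq w uv u3 by simp
  hence v: "v = V / G_coeff u" "v \<noteq> 0" using Gu W(4) by auto
  have "(x, y) \<in> varpi_dom" using mem_varpi_dom_iff[OF y] uv v(2) by simp
  hence "q = varpi_inv (u, V / G_coeff u)" using varpi_inv_varpi uv qxy v(1) by metis
  with gu show thesis by (rule that)
qed

lemma card_F_map_fibre:
  assumes p: "p \<in> varpi_dom" and W: "varpi p \<in> two_to_one_dom"
  shows "card {q \<in> F_dom. F_map q = p} = 2"
proof -
  obtain U V where w: "varpi p = (U, V)" by fastforce
  have "4 * U + 13 \<noteq> 0" using W w unfolding two_to_one_dom_def by auto
  then obtain r1 r2 where rr: "r1 \<noteq> r2" "{r. g_map r = U} = {r1, r2}"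
    by (rule g_map_preimage_two)
  define h where "h r = varpi_inv (r, V / G_coeff r)" for r
  note pre = F_map_varpi_inv_preimage[OF p w W[unfolded w], folded h_def]
  have "{q \<in> F_dom. F_map q = p} = h ` {r1, r2}"
  proof
    show "{q \<in> F_dom. F_map q = p} \<subseteq> h ` {r1, r2}"
      using F_map_preimage_eq_varpi_inv[OF p w W[unfolded w]] rr unfolding h_def by blast
    show "h ` {r1, r2} \<subseteq> {q \<in> F_dom. F_map q = p}" using pre(1,2) rr by auto
  qed
  moreover have "inj_on h {r1, r2}"
  proof (rule inj_onI)
    fix a b assume "a \<in> {r1, r2}" "b \<in> {r1, r2}" "h a = h b"
    thus "a = b" using pre(3) rr by (metis mem_Collect_eq)
  qed
  ultimately show ?thesis using rr(1) by (simp add: card_image)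
qed

lemma open_two_to_one_dom: "open two_to_one_dom"
proof -
  have eq: "two_to_one_dom = {p. fst p \<noteq> 3} \<inter> {p. fst p \<noteq> 9} \<inter> {p. fst p \<noteq> -3} \<inter> {p. 4 * fst p + 13 \<noteq> 0} \<inter>
     {p. snd p \<noteq> 0} \<inter> {p. 2 * snd p - fst p - 3 \<noteq> 0} \<inter> {p. 2 * snd p - fst p + 3 \<noteq> 0} \<inter>
     {p. g_map ((2 * snd p - fst p - 1) / 2) - fst p \<noteq> 0} \<inter> {p. exc_poly (fst p) (snd p) \<noteq> 0}"
    unfolding two_to_one_dom_def by auto
  show ?thesis unfolding eq g_map_def exc_poly_def
    by (intro open_Int open_Collect_neq continuous_intros) auto
qed

lemma dense_two_to_one_dom: "closure two_to_one_dom = UNIV"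
proof (rule closure_eq_UNIV_if_finite_fibres[of "{3, 9, -3, -13/4}"])
  fix a :: complex assume a: "a \<notin> {3, 9, -3, -13/4}"
  have "4 * a + 13 \<noteq> 0"
  proof
    assume "4 * a + 13 = 0"
    hence "a = -13/4" by (simp add: field_simps add_eq_0_iff2 minus_equation_iff)
    thus False using a by simp
  qed
  hence "{b. (a, b) \<notin> two_to_one_dom} \<subseteq> {b. (a, b) \<notin> varpi_inv_dom}
     \<union> {b. g_map ((2 * b - a - 1) / 2) - a = 0} \<union> {b. exc_poly a b = 0}"
    using a unfolding two_to_one_dom_def varpi_inv_dom_def by auto
  moreover have "finite {b. g_map ((2 * b - a - 1) / 2) - a = 0}"
    by (rule finite_roots_quadratic[where c = 1 and b = "- (a + 2)" and d = "(a + 1)^2 / 4 + (a + 1) / 2 - 3 - a"])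
       (simp_all add: g_map_def field_simps power2_eq_square)
  moreover have "finite {b. exc_poly a b = 0}"
  proof (rule finite_roots_quadratic[where c = "36 - 4 * a" and b = "- (20 + 4 * a) * (3 - a)" and d = "- (3 + a) * (3 - a)^2"])
    show "36 - 4 * a \<noteq> 0" using a by auto
  qed (simp add: exc_poly_def power2_eq_square algebra_simps)
  ultimately show "finite {b. (a, b) \<notin> two_to_one_dom}"
    using finite_fibres_varpi_inv_dom by (simp add: finite_subset)
qed simp

lemma holds_generically_two_to_one_dom: "holds_generically (\<lambda>w. w \<in> two_to_one_dom)"
  using open_two_to_one_dom dense_two_to_one_dom unfolding holds_generically_def by blast

fun g_iter_poly :: "nat \<Rightarrow> complex poly" where
  "g_iter_poly 0 = [:0, 1:]"
| "g_iter_poly (Suc j) = pcompose [:-3, -1, 1:] (g_iter_poly j)"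

lemma poly_g_iter_poly: "poly (g_iter_poly j) u = (g_map ^^ j) u"
  by (induction j) (simp_all add: poly_pcompose g_map_def algebra_simps power2_eq_square)

lemma degree_g_iter_poly: "degree (g_iter_poly j) = 2 ^ j"
  by (induction j) (simp_all add: degree_pcompose)

lemma finite_g_iter_fibre: "finite {u. (g_map ^^ j) u = c}"
proof -
  have "degree (g_iter_poly j + [:-c:]) = 2 ^ j"
    using degree_g_iter_poly[of j] by (subst degree_add_eq_left) auto
  hence "g_iter_poly j + [:-c:] \<noteq> 0" by (metis degree_0 power_not_zero zero_neq_numeral)
  hence "finite {u. poly (g_iter_poly j + [:-c:]) u = 0}" by (rule poly_roots_finite)
  thus ?thesis by (simp add: poly_g_iter_poly)
qed

definition G_coeff_prod :: "nat \<Rightarrow> complex \<Rightarrow> complex" where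
  "G_coeff_prod k u = (\<Prod>j<k. G_coeff ((g_map ^^ j) u))"

lemma G_map_iter: "(G_map ^^ k) (u, v) = ((g_map ^^ k) u, G_coeff_prod k u * v)"
  by (induction k) (simp_all add: G_coeff_prod_def G_map_eq)

definition iter_dom :: "nat \<Rightarrow> (complex \<times> complex) set" where
  "iter_dom n = {w \<in> varpi_inv_dom. \<forall>k<n. (G_map ^^ k) w \<in> conj_dom}"

lemma F_map_iter_varpi_inv:
  assumes "w \<in> iter_dom n"
  shows "(F_map ^^ n) (varpi_inv w) = varpi_inv ((G_map ^^ n) w) \<and> (G_map ^^ n) w \<in> varpi_inv_dom"
  using assms
proof (induction n)
  case 0
  thus ?case by (simp add: iter_dom_def)
next
  case (Suc n)
  hence IH: "(F_map ^^ n) (varpi_inv w) = varpi_inv ((G_map ^^ n) w)"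
    by (auto simp: iter_dom_def)
  have "(G_map ^^ n) w \<in> conj_dom" using Suc.prems by (simp add: iter_dom_def)
  from F_map_varpi_inv[OF this] G_map_in_varpi_inv_dom[OF this] IH show ?case by simp
qed

definition regular_orbit_dom :: "nat \<Rightarrow> (complex \<times> complex) set" where
  "regular_orbit_dom n = {w. \<forall>j<n. (g_map ^^ j) (fst w) \<notin> {1, -2, -3}}"

lemma open_regular_orbit_dom: "open (regular_orbit_dom n)"
proof -
  have eq: "regular_orbit_dom n = (\<Inter>j<n. {w. poly (g_iter_poly j) (fst w) \<noteq> 1}
      \<inter> {w. poly (g_iter_poly j) (fst w) \<noteq> -2} \<inter> {w. poly (g_iter_poly j) (fst w) \<noteq> -3})"
    unfolding regular_orbit_dom_def poly_g_iter_poly by auto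
  show ?thesis unfolding eq
    by (intro open_INT finite_lessThan ballI open_Int open_Collect_neq continuous_intros)
qed

lemma continuous_on_G_map_iter:
  assumes "k \<le> n"
  shows "continuous_on (regular_orbit_dom n) (G_map ^^ k)"
proof -
  have eq: "G_map ^^ k = (\<lambda>w. (poly (g_iter_poly k) (fst w),
      (\<Prod>j<k. (poly (g_iter_poly j) (fst w) - 1) * (poly (g_iter_poly j) (fst w) + 2)
        / (poly (g_iter_poly j) (fst w) + 3)) * snd w))"
    by (rule ext, case_tac w) (simp add: G_map_iter poly_g_iter_poly G_coeff_prod_def G_coeff_def)
  have "\<forall>w\<in>regular_orbit_dom n. poly (g_iter_poly j) (fst w) + 3 \<noteq> 0" if "j < k" for j
    using that assms unfolding regular_orbit_dom_def poly_g_iter_poly by (auto simp: add_eq_0_iff2)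
  thus ?thesis unfolding eq by (intro continuous_intros) auto
qed

lemma open_iter_dom: "open (iter_dom n)"
proof -
  have "w \<in> regular_orbit_dom n" if "w \<in> iter_dom n" for w
    using that fst_conj_dom unfolding iter_dom_def regular_orbit_dom_def
    by (cases w) (fastforce simp: G_map_iter)
  hence eq: "iter_dom n = varpi_inv_dom \<inter> regular_orbit_dom n
      \<inter> (\<Inter>k<n. (G_map ^^ k) -` conj_dom \<inter> regular_orbit_dom n)"
    unfolding iter_dom_def by auto
  have "open ((G_map ^^ k) -` conj_dom \<inter> regular_orbit_dom n)" if "k < n" for k
    using continuous_on_G_map_iter[of k n] that open_regular_orbit_dom open_conj_dom
      continuous_on_open_vimage by auto
  thus ?thesis unfolding eq using open_varpi_inv_dom open_regular_orbit_dom
    by (intro open_Int open_INT) auto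
qed

lemma dense_iter_dom: "closure (iter_dom n) = UNIV"
proof (rule closure_eq_UNIV_if_finite_fibres[of "\<Union>j<n. {a. (g_map ^^ j) a \<in> {1, -2, -3}}"])
  have "{a. (g_map ^^ j) a \<in> {1, -2, -3}}
      = {a. (g_map ^^ j) a = 1} \<union> {a. (g_map ^^ j) a = -2} \<union> {a. (g_map ^^ j) a = -3}" for j
    by auto
  thus "finite (\<Union>j<n. {a. (g_map ^^ j) a \<in> {1, -2, -3}})" using finite_g_iter_fibre by simp
next
  fix a assume "a \<notin> (\<Union>j<n. {a. (g_map ^^ j) a \<in> {1, -2, -3}})"
  hence a: "(g_map ^^ j) a \<notin> {1, -2, -3}" if "j < n" for j using that by blast
  have "{b. (a, b) \<notin> iter_dom n} \<subseteq> {b. (a, b) \<notin> varpi_inv_dom}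
      \<union> (\<Union>k<n. (\<lambda>b. G_coeff_prod k a * b) -` {b. ((g_map ^^ k) a, b) \<notin> conj_dom})"
    unfolding iter_dom_def by (auto simp: G_map_iter)
  moreover have "finite ((\<lambda>b. G_coeff_prod k a * b) -` {b. ((g_map ^^ k) a, b) \<notin> conj_dom})"
    if k: "k < n" for k
  proof (rule finite_vimageI)
    show "finite {b. ((g_map ^^ k) a, b) \<notin> conj_dom}" using finite_fibres_conj_dom a k by blast
    have "G_coeff_prod k a \<noteq> 0"
      using a k unfolding G_coeff_prod_def by (auto simp: G_coeff_def add_eq_0_iff2)
    thus "inj (\<lambda>b. G_coeff_prod k a * b)" by (simp add: inj_def)
  qed
  ultimately show "finite {b. (a, b) \<notin> iter_dom n}"
    using finite_fibres_varpi_inv_dom by (simp add: finite_subset)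
qed

lemma holds_generically_iter_dom: "holds_generically (\<lambda>w. w \<in> iter_dom n)"
  using open_iter_dom dense_iter_dom unfolding holds_generically_def by blast

lemma holds_generically_conj_dom: "holds_generically (\<lambda>w. w \<in> conj_dom)"
  using holds_generically_iter_dom[of 1] by (rule holds_generically_mono) (simp add: iter_dom_def)

section \<open>Polynomial functions of bounded degree\<close>

text \<open>bipoly_le d f: f is a polynomial of degree at most d in each variable, encoded as a
  polynomial in y whose coefficients are polynomials in x.\<close>

definition bipoly_le :: "nat \<Rightarrow> (complex \<times> complex \<Rightarrow> complex) \<Rightarrow> bool" where
  "bipoly_le d f \<longleftrightarrow> (\<exists>P :: complex poly poly. degree P \<le> d \<and> (\<forall>i. degree (coeff P i) \<le> d)
      \<and> (\<forall>x y. f (x, y) = poly (poly P [:y:]) x))"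

lemma bipoly_le_const: "bipoly_le d (\<lambda>_. c)"
  unfolding bipoly_le_def by (rule exI[of _ "[:[:c:]:]"]) (auto simp: coeff_pCons split: nat.splits)

lemma bipoly_le_fst: "bipoly_le 1 fst"
  unfolding bipoly_le_def by (rule exI[of _ "[:[:0, 1:]:]"]) (auto simp: coeff_pCons split: nat.splits)

lemma bipoly_le_snd: "bipoly_le 1 snd"
  unfolding bipoly_le_def by (rule exI[of _ "[:0, 1:]"]) (auto simp: coeff_pCons split: nat.splits)

lemma bipoly_le_mono: "bipoly_le a f \<Longrightarrow> a \<le> d \<Longrightarrow> bipoly_le d f"
  unfolding bipoly_le_def by (meson order_trans)

lemma bipoly_le_add:
  assumes "bipoly_le d f" "bipoly_le d g"
  shows "bipoly_le d (\<lambda>p. f p + g p)"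
proof -
  obtain P where "degree P \<le> d" "\<forall>i. degree (coeff P i) \<le> d" "\<forall>x y. f (x, y) = poly (poly P [:y:]) x"
    using assms(1) unfolding bipoly_le_def by blast
  moreover obtain Q where "degree Q \<le> d" "\<forall>i. degree (coeff Q i) \<le> d" "\<forall>x y. g (x, y) = poly (poly Q [:y:]) x"
    using assms(2) unfolding bipoly_le_def by blast
  ultimately show ?thesis unfolding bipoly_le_def
    by (intro exI[of _ "P + Q"]) (auto intro: degree_add_le)
qed

lemma bipoly_le_uminus: "bipoly_le d f \<Longrightarrow> bipoly_le d (\<lambda>p. - f p)"
proof -
  assume "bipoly_le d f"
  then obtain P where "degree P \<le> d" "\<forall>i. degree (coeff P i) \<le> d" "\<forall>x y. f (x, y) = poly (poly P [:y:]) x"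
    unfolding bipoly_le_def by blast
  thus ?thesis unfolding bipoly_le_def by (intro exI[of _ "- P"]) auto
qed

lemma bipoly_le_diff: "bipoly_le d f \<Longrightarrow> bipoly_le d g \<Longrightarrow> bipoly_le d (\<lambda>p. f p - g p)"
  using bipoly_le_add[of d f "\<lambda>p. - g p"] bipoly_le_uminus by simp

lemma degree_coeff_mult_le:
  fixes P Q :: "'a::idom poly poly"
  assumes "\<forall>i. degree (coeff P i) \<le> a" "\<forall>i. degree (coeff Q i) \<le> b"
  shows "degree (coeff (P * Q) n) \<le> a + b"
  unfolding coeff_mult
  by (rule degree_sum_le) (auto intro: order_trans[OF degree_mult_le] add_mono assms[rule_format])

lemma bipoly_le_mult:
  assumes "bipoly_le a f" "bipoly_le b g" "a + b \<le> d"
  shows "bipoly_le d (\<lambda>p. f p * g p)"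
proof -
  obtain P where P: "degree P \<le> a" "\<forall>i. degree (coeff P i) \<le> a" "\<forall>x y. f (x, y) = poly (poly P [:y:]) x"
    using assms(1) unfolding bipoly_le_def by blast
  obtain Q where Q: "degree Q \<le> b" "\<forall>i. degree (coeff Q i) \<le> b" "\<forall>x y. g (x, y) = poly (poly Q [:y:]) x"
    using assms(2) unfolding bipoly_le_def by blast
  have "degree (P * Q) \<le> d" using P(1) Q(1) assms(3) by (meson add_mono degree_mult_le order_trans)
  moreover have "degree (coeff (P * Q) i) \<le> d" for i
    using degree_coeff_mult_le[OF P(2) Q(2)] assms(3) order_trans by blast
  ultimately show ?thesis unfolding bipoly_le_def using P(3) Q(3) by (intro exI[of _ "P * Q"]) simp
qed

lemma bipoly_le_cmult: "bipoly_le d f \<Longrightarrow> bipoly_le d (\<lambda>p. c * f p)"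
  using bipoly_le_mult[OF bipoly_le_const[of 0 c]] by simp

lemma bipoly_le_power: "bipoly_le d f \<Longrightarrow> bipoly_le (k * d) (\<lambda>p. f p ^ k)"
  by (induction k) (simp_all add: bipoly_le_const bipoly_le_mult)

lemma poly_eq_sum_le_degree:
  fixes p :: "'a::comm_semiring_1 poly"
  assumes "degree p \<le> n"
  shows "poly p x = (\<Sum>i\<le>n. coeff p i * x ^ i)"
  unfolding poly_altdef
  by (rule sum.mono_neutral_left) (use assms in \<open>auto simp: coeff_eq_0\<close>)

lemma poly_poly_eq_double_sum:
  fixes P :: "'a::comm_semiring_1 poly poly"
  assumes "degree P \<le> d" "\<forall>i. degree (coeff P i) \<le> d"
  shows "poly (poly P [:y:]) x = (\<Sum>j\<le>d. \<Sum>i\<le>d. coeff (coeff P j) i * x ^ i * y ^ j)"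
proof -
  have "poly (poly P [:y:]) x = (\<Sum>j\<le>d. poly (coeff P j) x * y ^ j)"
    using poly_eq_sum_le_degree[OF assms(1), of "[:y:]"] by (simp add: poly_sum poly_power)
  also have "\<dots> = (\<Sum>j\<le>d. (\<Sum>i\<le>d. coeff (coeff P j) i * x ^ i) * y ^ j)"
    using poly_eq_sum_le_degree[OF assms(2)[rule_format]] by simp
  finally show ?thesis by (simp add: sum_distrib_right)
qed

lemma bipoly_le_hom_eval:
  assumes "bipoly_le d f"
  shows "\<exists>c. \<forall>x y. f (x, y) = hom_eval (2 * d) c x y 1"
proof -
  obtain P where P: "degree P \<le> d" "\<forall>i. degree (coeff P i) \<le> d" "\<forall>x y. f (x, y) = poly (poly P [:y:]) x"
    using assms unfolding bipoly_le_def by blast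
  define c where "c = (\<lambda>ij. coeff (coeff P (snd ij)) (fst ij))"
  have "f (x, y) = hom_eval (2 * d) c x y 1" for x y
  proof -
    define T where "T = {(i, j). i + j \<le> 2 * d}"
    define F where "F = (\<lambda>ij. c ij * x ^ fst ij * y ^ snd ij)"
    have fT: "finite T" unfolding T_def
      by (rule finite_subset[of _ "{..2 * d} \<times> {..2 * d}"]) auto
    have F0: "F ij = 0" if "ij \<in> T - {..d} \<times> {..d}" for ij
    proof -
      have "fst ij > d \<or> snd ij > d" using that by (cases ij) auto
      hence "c ij = 0"
      proof
        assume "fst ij > d"
        hence "degree (coeff P (snd ij)) < fst ij" using P(2) le_less_trans by blast
        thus ?thesis unfolding c_def by (rule coeff_eq_0)
      next
        assume "snd ij > d"
        hence "degree P < snd ij" using P(1) le_less_trans by blast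
        thus ?thesis unfolding c_def by (simp add: coeff_eq_0)
      qed
      thus ?thesis unfolding F_def by simp
    qed
    have "hom_eval (2 * d) c x y 1 = sum F T" unfolding hom_eval_def T_def F_def by simp
    also have "\<dots> = sum F ({..d} \<times> {..d})"
      by (rule sum.mono_neutral_right[OF fT]) (use F0 in \<open>auto simp: T_def\<close>)
    also have "\<dots> = (\<Sum>i\<le>d. \<Sum>j\<le>d. F (i, j))" by (simp add: sum.cartesian_product)
    also have "\<dots> = (\<Sum>j\<le>d. \<Sum>i\<le>d. F (i, j))" by (rule sum.swap)
    also have "\<dots> = f (x, y)"
      unfolding P(3)[rule_format] poly_poly_eq_double_sum[OF P(1,2)] F_def c_def by simp
    finally show ?thesis by simp
  qed
  thus ?thesis by blast
qed

lemma bipoly_le_vertical_line: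
  assumes "bipoly_le d f"
  shows "\<exists>q. \<forall>t. f (x0, t) = poly q t"
proof -
  obtain P where P: "\<forall>x y. f (x, y) = poly (poly P [:y:]) x"
    using assms unfolding bipoly_le_def by blast
  have "poly (poly P [:t:]) x0 = poly (map_poly (\<lambda>q. poly q x0) P) t" for t
    by (induction P) (auto simp: map_poly_pCons algebra_simps)
  thus ?thesis using P by (intro exI[of _ "map_poly (\<lambda>q. poly q x0) P"]) auto
qed

lemma hom_eval_vertical_line:
  "\<exists>q. degree q \<le> d \<and> (\<forall>t. hom_eval d c x0 t 1 = poly q t)"
proof -
  define T where "T = {(i, j). i + j \<le> (d::nat)}"
  have fT: "finite T" unfolding T_def
    by (rule finite_subset[of _ "{..d} \<times> {..d}"]) auto
  define q where "q = (\<Sum>ij\<in>T. monom (c ij * x0 ^ fst ij) (snd ij))"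
  have "degree q \<le> d" unfolding q_def
    by (rule degree_sum_le[OF fT]) (auto simp: T_def intro: order_trans[OF degree_monom_le])
  moreover have "hom_eval d c x0 t 1 = poly q t" for t
    unfolding q_def hom_eval_def T_def[symmetric] by (simp add: poly_sum poly_monom mult.assoc)
  ultimately show ?thesis by blast
qed

lemma continuous_on_hom_eval: "continuous_on UNIV (\<lambda>p. hom_eval d c (fst p) (snd p) 1)"
  unfolding hom_eval_def by (intro continuous_intros)

lemma continuous_on_bipoly_le:
  assumes "bipoly_le d f"
  shows "continuous_on UNIV f"
proof -
  obtain c where "\<forall>x y. f (x, y) = hom_eval (2 * d) c x y 1" using bipoly_le_hom_eval[OF assms] by blast
  hence "f = (\<lambda>p. hom_eval (2 * d) c (fst p) (snd p) 1)" by (auto simp: fun_eq_iff)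
  thus ?thesis using continuous_on_hom_eval by simp
qed

section \<open>A closed formula for the iterates of F\<close>

definition y_pow :: "nat \<Rightarrow> complex \<times> complex \<Rightarrow> complex" where
  "y_pow k p = snd p ^ 2 ^ k"

definition psi_num :: "complex \<times> complex \<Rightarrow> complex" where
  "psi_num p = fst p ^ 2 - 1 - fst p * snd p - 2 * snd p ^ 2"

definition varpi_snd_num :: "complex \<times> complex \<Rightarrow> complex" where
  "varpi_snd_num p = (1 + fst p - 2 * snd p) * (1 + fst p + snd p)"

text \<open>Phi k / y_pow k is g^k o psi, and A_num k / A_den k is G_coeff_prod k o psi.\<close>

fun Phi :: "nat \<Rightarrow> complex \<times> complex \<Rightarrow> complex" where
  "Phi 0 p = psi_num p"
| "Phi (Suc k) p = Phi k p ^ 2 - y_pow k p * Phi k p - 3 * y_pow (Suc k) p"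

fun A_num :: "nat \<Rightarrow> complex \<times> complex \<Rightarrow> complex" where
  "A_num 0 p = 1"
| "A_num (Suc k) p = A_num k p * ((Phi k p - y_pow k p) * (Phi k p + 2 * y_pow k p))"

fun A_den :: "nat \<Rightarrow> complex \<times> complex \<Rightarrow> complex" where
  "A_den 0 p = 1"
| "A_den (Suc k) p = A_den k p * (y_pow k p * (Phi k p + 3 * y_pow k p))"

lemma y_pow_Suc: "y_pow (Suc k) p = y_pow k p ^ 2"
  unfolding y_pow_def by (simp add: power_mult[symmetric] mult.commute)

lemma fst_varpi_eq: "fst (varpi p) = psi_num p / snd p"
  by (cases p) (simp add: varpi_def psi_num_def)

lemma snd_varpi_eq: "snd (varpi p) = varpi_snd_num p / (2 * snd p)"
  by (cases p) (simp add: varpi_def varpi_snd_num_def)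

lemma g_iter_fst_varpi:
  assumes "snd p \<noteq> 0"
  shows "(g_map ^^ k) (fst (varpi p)) = Phi k p / y_pow k p"
proof (induction k)
  case 0
  show ?case by (simp add: fst_varpi_eq y_pow_def)
next
  case (Suc k)
  have "y_pow k p \<noteq> 0" using assms by (simp add: y_pow_def)
  hence "g_map (Phi k p / y_pow k p) = Phi (Suc k) p / y_pow (Suc k) p"
    unfolding g_map_def Phi.simps y_pow_Suc by (simp add: field_simps power2_eq_square)
  thus ?case using Suc by simp
qed

lemma G_coeff_prod_fst_varpi:
  assumes y: "snd p \<noteq> 0" and "\<forall>j<k. (g_map ^^ j) (fst (varpi p)) + 3 \<noteq> 0"
  shows "G_coeff_prod k (fst (varpi p)) = A_num k p / A_den k p \<and> A_den k p \<noteq> 0"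
  using assms(2)
proof (induction k)
  case 0
  show ?case by (simp add: G_coeff_prod_def)
next
  case (Suc k)
  have IH: "G_coeff_prod k (fst (varpi p)) = A_num k p / A_den k p" "A_den k p \<noteq> 0"
    using Suc by auto
  have Y: "y_pow k p \<noteq> 0" using y by (simp add: y_pow_def)
  have "Phi k p / y_pow k p + 3 \<noteq> 0" using Suc.prems g_iter_fst_varpi[OF y, of k] by auto
  hence P3: "Phi k p + 3 * y_pow k p \<noteq> 0" using Y by (simp add: field_simps)
  have "G_coeff_prod (Suc k) (fst (varpi p)) = A_num k p / A_den k p
      * (((Phi k p - y_pow k p) * (Phi k p + 2 * y_pow k p)) / (y_pow k p * (Phi k p + 3 * y_pow k p)))"
    using IH G_coeff_frac[OF Y P3] g_iter_fst_varpi[OF y, of k] by (simp add: G_coeff_prod_def)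
  also have "\<dots> = A_num (Suc k) p / A_den (Suc k) p" by (simp add: times_divide_times_eq)
  finally show ?case using IH Y P3 by simp
qed

lemma Phi_snd_zero: "Phi k (x, 0) = (x\<^sup>2 - 1) ^ (2 ^ k)"
  by (induction k) (simp_all add: psi_num_def y_pow_def power_mult[symmetric] mult.commute power_0_left)

lemma bipoly_le_y_pow: "bipoly_le (2 ^ k) (y_pow k)"
  using bipoly_le_power[OF bipoly_le_snd, of "2 ^ k"] unfolding y_pow_def by simp

lemma bipoly_le_psi_num: "bipoly_le 2 psi_num"
proof -
  have x2: "bipoly_le 2 (\<lambda>p. fst p ^ 2)" and y2: "bipoly_le 2 (\<lambda>p. 2 * snd p ^ 2)"
    using bipoly_le_power[OF bipoly_le_fst, of 2] bipoly_le_cmult[OF bipoly_le_power[OF bipoly_le_snd, of 2]]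
    by simp_all
  have xy: "bipoly_le 2 (\<lambda>p. fst p * snd p)" by (rule bipoly_le_mult[OF bipoly_le_fst bipoly_le_snd]) simp
  show ?thesis unfolding psi_num_def[abs_def]
    by (rule bipoly_le_diff[OF bipoly_le_diff[OF bipoly_le_diff[OF x2 bipoly_le_const] xy] y2])
qed

lemma bipoly_le_varpi_snd_num: "bipoly_le 2 varpi_snd_num"
proof -
  have a: "bipoly_le 1 (\<lambda>p. 1 + fst p)" by (rule bipoly_le_add[OF bipoly_le_const bipoly_le_fst])
  have "bipoly_le 1 (\<lambda>p. 1 + fst p - 2 * snd p)" "bipoly_le 1 (\<lambda>p. 1 + fst p + snd p)"
    using bipoly_le_diff[OF a bipoly_le_cmult[OF bipoly_le_snd]] bipoly_le_add[OF a bipoly_le_snd]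
    by simp_all
  thus ?thesis unfolding varpi_snd_num_def[abs_def] by (rule bipoly_le_mult) simp
qed

lemma bipoly_le_Phi: "bipoly_le (2 ^ (k + 1)) (Phi k)"
proof (induction k)
  case 0
  show ?case using bipoly_le_psi_num by simp
next
  case (Suc k)
  have "bipoly_le (2 ^ (k + 2)) (\<lambda>p. Phi k p ^ 2)"
    using bipoly_le_power[OF Suc, of 2] by (simp add: mult.commute)
  moreover have "bipoly_le (2 ^ (k + 2)) (\<lambda>p. y_pow k p * Phi k p)"
    by (rule bipoly_le_mult[OF bipoly_le_y_pow Suc]) simp
  moreover have "bipoly_le (2 ^ (k + 2)) (\<lambda>p. 3 * y_pow (Suc k) p)"
    by (rule bipoly_le_mono[OF bipoly_le_cmult[OF bipoly_le_y_pow]]) simp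
  ultimately show ?case by (simp add: bipoly_le_diff)
qed

lemma bipoly_le_A_num: "bipoly_le (2 ^ (k + 2)) (A_num k)"
proof (induction k)
  case 0
  show ?case by (simp add: bipoly_le_const)
next
  case (Suc k)
  have "bipoly_le (2 ^ (k + 1)) (\<lambda>p. Phi k p - y_pow k p)"
    "bipoly_le (2 ^ (k + 1)) (\<lambda>p. Phi k p + 2 * y_pow k p)"
    using bipoly_le_Phi bipoly_le_mono[OF bipoly_le_y_pow, of k "2 ^ (k + 1)"]
    by (auto intro: bipoly_le_diff bipoly_le_add bipoly_le_cmult)
  hence "bipoly_le (2 ^ (k + 2)) (\<lambda>p. (Phi k p - y_pow k p) * (Phi k p + 2 * y_pow k p))"
    by (rule bipoly_le_mult) simp
  from bipoly_le_mult[OF Suc this] show ?case by simp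
qed

lemma bipoly_le_A_den: "bipoly_le (2 ^ (k + 2)) (A_den k)"
proof (induction k)
  case 0
  show ?case by (simp add: bipoly_le_const)
next
  case (Suc k)
  have "bipoly_le (2 ^ (k + 1)) (\<lambda>p. Phi k p + 3 * y_pow k p)"
    using bipoly_le_Phi bipoly_le_mono[OF bipoly_le_y_pow, of k "2 ^ (k + 1)"]
    by (auto intro: bipoly_le_add bipoly_le_cmult)
  hence "bipoly_le (2 ^ (k + 2)) (\<lambda>p. y_pow k p * (Phi k p + 3 * y_pow k p))"
    by (rule bipoly_le_mult[OF bipoly_le_y_pow]) simp
  from bipoly_le_mult[OF Suc this] show ?case by simp
qed

text \<open>Clearing denominators in varpi_inv (nu / du, nv / dv).\<close>

definition varpi_inv_den :: "complex \<Rightarrow> complex \<Rightarrow> complex \<Rightarrow> complex \<Rightarrow> complex" where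
  "varpi_inv_den nu du nv dv =
     (2 * nv * du - nu * dv - 3 * dv * du) * (2 * nv * du - nu * dv + 3 * dv * du)"

definition varpi_inv_num_x :: "complex \<Rightarrow> complex \<Rightarrow> complex \<Rightarrow> complex \<Rightarrow> complex" where
  "varpi_inv_num_x nu du nv dv =
     4 * nv * du * (2 * nv * du - nu * dv + dv * du) - varpi_inv_den nu du nv dv"

definition varpi_inv_num_y :: "complex \<Rightarrow> complex \<Rightarrow> complex \<Rightarrow> complex \<Rightarrow> complex" where
  "varpi_inv_num_y nu du nv dv = 8 * nv * dv * du\<^sup>2"

lemma varpi_inv_frac:
  fixes nu du nv dv :: complex
  assumes "du \<noteq> 0" "dv \<noteq> 0" "(nu / du, nv / dv) \<in> varpi_inv_dom"
  defines "D \<equiv> varpi_inv_den nu du nv dv"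
  shows "D \<noteq> 0"
    and "varpi_inv (nu / du, nv / dv) = (varpi_inv_num_x nu du nv dv / D, varpi_inv_num_y nu du nv dv / D)"
proof -
  define s where "s = 2 * nv * du - nu * dv"
  define e where "e = dv * du"
  have e0: "e \<noteq> 0" unfolding e_def using assms(1,2) by simp
  have es: "2 * (nv / dv) - nu / du = s / e" unfolding s_def e_def using assms(1,2) by (simp add: field_simps)
  have pm: "s / e - 3 = (s - 3 * e) / e" "s / e + 3 = (s + 3 * e) / e"
    using e0 by (simp_all add: field_simps)
  have "s / e - 3 \<noteq> 0" "s / e + 3 \<noteq> 0" using assms(3) es by (auto simp: varpi_inv_dom_def)
  hence "s - 3 * e \<noteq> 0" "s + 3 * e \<noteq> 0" using e0 unfolding pm by simp_all
  thus D0: "D \<noteq> 0" unfolding D_def varpi_inv_den_def s_def e_def by (simp add: mult.assoc)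
  have DD: "D = (s - 3 * e) * (s + 3 * e)" unfolding D_def varpi_inv_den_def s_def e_def by (simp add: mult.assoc)
  have Y: "8 * (nv / dv) / ((2 * (nv / dv) - nu / du - 3) * (2 * (nv / dv) - nu / du + 3))
      = varpi_inv_num_y nu du nv dv / D"
  proof -
    have "(2 * (nv / dv) - nu / du - 3) * (2 * (nv / dv) - nu / du + 3) = D / (e * e)"
      unfolding es pm DD by (simp add: times_divide_times_eq)
    moreover have "8 * (nv / dv) * (e * e) = varpi_inv_num_y nu du nv dv"
      unfolding e_def varpi_inv_num_y_def using assms(2) by (simp add: field_simps power2_eq_square)
    ultimately show ?thesis by (simp add: divide_divide_eq_right)
  qed
  have X: "(2 * (nv / dv) - nu / du + 1) / 2 * (varpi_inv_num_y nu du nv dv / D) - 1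
      = varpi_inv_num_x nu du nv dv / D"
  proof -
    have "2 * (nv / dv) - nu / du + 1 = (s + e) / e" unfolding es using e0 by (simp add: field_simps)
    hence "(2 * (nv / dv) - nu / du + 1) / 2 * (varpi_inv_num_y nu du nv dv / D)
        = 4 * nv * du * (s + e) / D"
      using e0 D0 assms(1,2) unfolding e_def varpi_inv_num_y_def by (simp add: field_simps power2_eq_square)
    thus ?thesis using D0 unfolding varpi_inv_num_x_def s_def e_def D_def
      by (simp add: diff_divide_distrib)
  qed
  show "varpi_inv (nu / du, nv / dv) = (varpi_inv_num_x nu du nv dv / D, varpi_inv_num_y nu du nv dv / D)"
    unfolding varpi_inv_def Let_def prod.case Y X ..
qed

lemma bipoly_le_varpi_inv_parts:
  assumes nu: "bipoly_le d nu" and du: "bipoly_le d du" and nv: "bipoly_le d nv" and dv: "bipoly_le d dv"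
  shows "bipoly_le (4 * d) (\<lambda>p. varpi_inv_den (nu p) (du p) (nv p) (dv p))"
    and "bipoly_le (4 * d) (\<lambda>p. varpi_inv_num_x (nu p) (du p) (nv p) (dv p))"
    and "bipoly_le (4 * d) (\<lambda>p. varpi_inv_num_y (nu p) (du p) (nv p) (dv p))"
proof -
  have nvdu: "bipoly_le (2 * d) (\<lambda>p. nv p * du p)" by (rule bipoly_le_mult[OF nv du]) simp
  have s: "bipoly_le (2 * d) (\<lambda>p. 2 * nv p * du p - nu p * dv p)"
    using bipoly_le_cmult[OF nvdu, of 2] bipoly_le_mult[OF nu dv, of "2 * d"]
    by (simp add: bipoly_le_diff mult.assoc)
  have e: "bipoly_le (2 * d) (\<lambda>p. dv p * du p)" by (rule bipoly_le_mult[OF dv du]) simp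
  have "bipoly_le (2 * d) (\<lambda>p. 2 * nv p * du p - nu p * dv p - 3 * dv p * du p)"
    "bipoly_le (2 * d) (\<lambda>p. 2 * nv p * du p - nu p * dv p + 3 * dv p * du p)"
    using bipoly_le_diff[OF s bipoly_le_cmult[OF e, of 3]] bipoly_le_add[OF s bipoly_le_cmult[OF e, of 3]]
    by (simp_all add: mult.assoc)
  from bipoly_le_mult[OF this, of "4 * d"]
  show den: "bipoly_le (4 * d) (\<lambda>p. varpi_inv_den (nu p) (du p) (nv p) (dv p))"
    unfolding varpi_inv_den_def by simp
  have "bipoly_le (2 * d) (\<lambda>p. 2 * nv p * du p - nu p * dv p + dv p * du p)"
    by (rule bipoly_le_add[OF s e])
  from bipoly_le_mult[OF bipoly_le_cmult[OF nvdu, of 4] this, of "4 * d"]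
  show "bipoly_le (4 * d) (\<lambda>p. varpi_inv_num_x (nu p) (du p) (nv p) (dv p))"
    unfolding varpi_inv_num_x_def using bipoly_le_diff[OF _ den] by (simp add: mult.assoc)
  have "bipoly_le (2 * d) (\<lambda>p. 8 * nv p * dv p)" "bipoly_le (2 * d) (\<lambda>p. du p ^ 2)"
    using bipoly_le_cmult[OF bipoly_le_mult[OF nv dv, of "2 * d"], of 8] bipoly_le_power[OF du, of 2]
    by (simp_all add: mult.assoc mult.commute)
  from bipoly_le_mult[OF this, of "4 * d"]
  show "bipoly_le (4 * d) (\<lambda>p. varpi_inv_num_y (nu p) (du p) (nv p) (dv p))"
    unfolding varpi_inv_num_y_def by simp
qed

lemma G_map_iter_varpi:
  assumes p: "p \<in> varpi_dom" and w: "varpi p \<in> iter_dom n"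
  shows "(G_map ^^ n) (varpi p)
      = (Phi n p / y_pow n p, A_num n p * varpi_snd_num p / (2 * snd p * A_den n p))"
    and "2 * snd p * A_den n p \<noteq> 0"
proof -
  have y: "snd p \<noteq> 0" using p unfolding varpi_dom_def by auto
  obtain u v where uv: "varpi p = (u, v)" by fastforce
  have "\<forall>j<n. (g_map ^^ j) u + 3 \<noteq> 0"
  proof (intro allI impI)
    fix j assume "j < n"
    hence "(G_map ^^ j) (u, v) \<in> conj_dom" using w uv unfolding iter_dom_def by auto
    thus "(g_map ^^ j) u + 3 \<noteq> 0"
      using fst_conj_dom by (fastforce simp: G_map_iter add_eq_0_iff2)
  qed
  hence A: "G_coeff_prod n u = A_num n p / A_den n p" "A_den n p \<noteq> 0"
    using G_coeff_prod_fst_varpi[OF y] uv by auto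
  show "2 * snd p * A_den n p \<noteq> 0" using y A(2) by simp
  have "v = varpi_snd_num p / (2 * snd p)" using snd_varpi_eq[of p] uv by simp
  thus "(G_map ^^ n) (varpi p)
      = (Phi n p / y_pow n p, A_num n p * varpi_snd_num p / (2 * snd p * A_den n p))"
    using g_iter_fst_varpi[OF y, of n] uv A(1)
    by (simp add: G_map_iter times_divide_times_eq mult_ac)
qed

lemma F_map_iter_frac:
  assumes p: "p \<in> varpi_dom" and w: "varpi p \<in> iter_dom n"
  defines "nu \<equiv> Phi n p" and "du \<equiv> y_pow n p"
    and "nv \<equiv> A_num n p * varpi_snd_num p" and "dv \<equiv> 2 * snd p * A_den n p"
  shows "varpi_inv_den nu du nv dv \<noteq> 0"
    and "(F_map ^^ n) p = (varpi_inv_num_x nu du nv dv / varpi_inv_den nu du nv dv,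
                           varpi_inv_num_y nu du nv dv / varpi_inv_den nu du nv dv)"
proof -
  have du: "du \<noteq> 0" using p unfolding du_def y_pow_def varpi_dom_def by auto
  have G: "(G_map ^^ n) (varpi p) = (nu / du, nv / dv)" "dv \<noteq> 0"
    using G_map_iter_varpi[OF p w] unfolding nu_def du_def nv_def dv_def by simp_all
  have F: "(F_map ^^ n) p = varpi_inv (nu / du, nv / dv)" "(nu / du, nv / dv) \<in> varpi_inv_dom"
    using F_map_iter_varpi_inv[OF w] varpi_inv_varpi[OF p] G(1) by simp_all
  show "varpi_inv_den nu du nv dv \<noteq> 0" by (rule varpi_inv_frac(1)[OF du G(2) F(2)])
  show "(F_map ^^ n) p = (varpi_inv_num_x nu du nv dv / varpi_inv_den nu du nv dv,
                           varpi_inv_num_y nu du nv dv / varpi_inv_den nu du nv dv)"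
    using varpi_inv_frac(2)[OF du G(2) F(2)] F(1) by simp
qed

lemma psi_F_map_iter:
  assumes p: "p \<in> varpi_dom" and w: "varpi p \<in> iter_dom n"
  shows "snd ((F_map ^^ n) p) \<noteq> 0" and "psi ((F_map ^^ n) p) = Phi n p / y_pow n p"
proof -
  define w' where "w' = (G_map ^^ n) (varpi p)"
  have F: "(F_map ^^ n) p = varpi_inv w'" "w' \<in> varpi_inv_dom"
    using F_map_iter_varpi_inv[OF w] varpi_inv_varpi[OF p] unfolding w'_def by simp_all
  show "snd ((F_map ^^ n) p) \<noteq> 0"
    using varpi_inv_in_varpi_dom[OF F(2)] F(1) by (auto simp: varpi_dom_def)
  show "psi ((F_map ^^ n) p) = Phi n p / y_pow n p"
    using varpi_varpi_inv[OF F(2)] F(1) G_map_iter_varpi(1)[OF p w]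
    unfolding psi_eq_fst_varpi w'_def by simp
qed

section \<open>Degree growth\<close>

definition hom_repr :: "nat \<Rightarrow> (complex \<times> complex \<Rightarrow> complex \<times> complex) \<Rightarrow> bool" where
  "hom_repr d f \<longleftrightarrow> (\<exists>cX cY cZ. holds_generically (\<lambda>(x, y). hom_eval d cZ x y 1 \<noteq> 0 \<and>
     f (x, y) = (hom_eval d cX x y 1 / hom_eval d cZ x y 1, hom_eval d cY x y 1 / hom_eval d cZ x y 1)))"

lemma alg_deg_eq_Least: "alg_deg f = (LEAST d. hom_repr d f)"
  unfolding alg_deg_def hom_repr_def ..

lemma alg_deg_le: "hom_repr d f \<Longrightarrow> alg_deg f \<le> d"
  unfolding alg_deg_eq_Least by (rule Least_le)

lemma hom_repr_alg_deg: "hom_repr d f \<Longrightarrow> hom_repr (alg_deg f) f"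
  unfolding alg_deg_eq_Least by (rule LeastI)

lemma hom_repr_F_map_iter: "hom_repr (2 ^ (n + 6)) (F_map ^^ n)"
proof -
  define B where "B = (2::nat) ^ (n + 3)"
  have B: "2 ^ (n + 1) \<le> B" "2 ^ n \<le> B" "2 ^ (n + 2) + 2 \<le> B" "1 + 2 ^ (n + 2) \<le> B"
    unfolding B_def by (simp_all add: power_add)
  have nu: "bipoly_le B (Phi n)" by (rule bipoly_le_mono[OF bipoly_le_Phi B(1)])
  have du: "bipoly_le B (y_pow n)" by (rule bipoly_le_mono[OF bipoly_le_y_pow B(2)])
  have nv: "bipoly_le B (\<lambda>p. A_num n p * varpi_snd_num p)"
    by (rule bipoly_le_mult[OF bipoly_le_A_num bipoly_le_varpi_snd_num B(3)])
  have dv: "bipoly_le B (\<lambda>p. 2 * snd p * A_den n p)"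
    by (rule bipoly_le_mult[OF bipoly_le_cmult[OF bipoly_le_snd] bipoly_le_A_den B(4)])
  have d: "2 * (4 * B) = 2 ^ (n + 6)" unfolding B_def by (simp add: power_add)
  obtain cZ cX cY where
    cZ: "\<forall>x y. varpi_inv_den (Phi n (x, y)) (y_pow n (x, y)) (A_num n (x, y) * varpi_snd_num (x, y))
       (2 * y * A_den n (x, y)) = hom_eval (2 ^ (n + 6)) cZ x y 1" and
    cX: "\<forall>x y. varpi_inv_num_x (Phi n (x, y)) (y_pow n (x, y)) (A_num n (x, y) * varpi_snd_num (x, y))
       (2 * y * A_den n (x, y)) = hom_eval (2 ^ (n + 6)) cX x y 1" and
    cY: "\<forall>x y. varpi_inv_num_y (Phi n (x, y)) (y_pow n (x, y)) (A_num n (x, y) * varpi_snd_num (x, y))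
       (2 * y * A_den n (x, y)) = hom_eval (2 ^ (n + 6)) cY x y 1"
    using bipoly_le_varpi_inv_parts[OF nu du nv dv, THEN bipoly_le_hom_eval] unfolding d by auto
  have hg: "holds_generically (\<lambda>p. p \<in> varpi_dom \<and> varpi p \<in> iter_dom n)"
    by (rule holds_generically_pullback_varpi[OF holds_generically_iter_dom])
  show ?thesis unfolding hom_repr_def
    by (intro exI[of _ cX] exI[of _ cY] exI[of _ cZ] holds_generically_mono[OF hg])
       (use F_map_iter_frac cX cY cZ in \<open>auto simp flip: cX cY cZ\<close>)
qed

lemma order_zero_le_degree:
  fixes A B C :: "'a::idom poly"
  assumes "A * monom 1 m = B * C" "poly B 0 \<noteq> 0" "C \<noteq> 0"
  shows "m \<le> degree C"
proof -
  have BC: "B * C \<noteq> 0" using assms(2,3) by auto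
  hence "order 0 (A * monom 1 m) = order 0 A + order 0 (monom (1::'a) m)"
    using assms(1) by (intro order_mult) simp
  hence "m \<le> order 0 (B * C)" using assms(1) by simp
  also have "\<dots> = order 0 C" using BC assms(2) by (simp add: order_mult order_root)
  also have "\<dots> \<le> degree C" by (rule order_degree[OF assms(3)])
  finally show ?thesis .
qed

lemma holds_generically_fst_sq_ne_one: "holds_generically (\<lambda>p::complex \<times> complex. (fst p)\<^sup>2 \<noteq> 1)"
proof (rule holds_genericallyI[of "{p. (fst p)\<^sup>2 \<noteq> 1}" "{1, -1}"])
  show "open {p :: complex \<times> complex. (fst p)\<^sup>2 \<noteq> 1}"
    by (intro open_Collect_neq continuous_intros)
  show "finite {b. (a, b) \<notin> {p. (fst p)\<^sup>2 \<noteq> 1}}" if "a \<notin> {1, -1}" for a :: complex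
    using that by (simp add: power2_eq_1_iff)
qed auto

lemma psi_F_map_iter_homogeneous:
  fixes X Y Z :: complex
  assumes "p \<in> varpi_dom" "varpi p \<in> iter_dom n" "Z \<noteq> 0" "(F_map ^^ n) p = (X / Z, Y / Z)"
  shows "Y \<noteq> 0 \<and> (X\<^sup>2 - X * Y - 2 * Y\<^sup>2 - Z\<^sup>2) * y_pow n p = Phi n p * Y * Z"
proof -
  have Y: "Y \<noteq> 0" using psi_F_map_iter(1)[OF assms(1,2)] assms(4) by auto
  have "snd p \<noteq> 0" using assms(1) by (auto simp: varpi_dom_def)
  hence "y_pow n p \<noteq> 0" by (simp add: y_pow_def)
  moreover have "(X\<^sup>2 - X * Y - 2 * Y\<^sup>2 - Z\<^sup>2) / (Y * Z) = Phi n p / y_pow n p"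
    using psi_F_map_iter(2)[OF assms(1,2)] assms(3,4) Y unfolding psi_def
    by (simp add: field_simps power2_eq_square)
  ultimately show ?thesis using Y assms(3) by (simp add: frac_eq_eq mult.assoc)
qed

text \<open>Written in homogeneous coordinates, the identity psi o F^n = Phi n / y^(2^n) holds on a
  dense set and hence, by continuity, everywhere.\<close>

lemma hom_repr_F_map_iter_identity:
  assumes "hom_repr d (F_map ^^ n)"
  obtains cX cY cZ \<alpha> t0 where
    "\<And>x y. ((hom_eval d cX x y 1)\<^sup>2 - hom_eval d cX x y 1 * hom_eval d cY x y 1
        - 2 * (hom_eval d cY x y 1)\<^sup>2 - (hom_eval d cZ x y 1)\<^sup>2) * y ^ 2 ^ n = Phi n (x, y) * hom_eval d cY x y 1 * hom_eval d cZ x y 1"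
    and "\<alpha>\<^sup>2 \<noteq> 1" "hom_eval d cY \<alpha> t0 1 \<noteq> 0" "hom_eval d cZ \<alpha> t0 1 \<noteq> 0"
proof -
  obtain cX cY cZ where H: "holds_generically (\<lambda>(x, y). hom_eval d cZ x y 1 \<noteq> 0 \<and>
      (F_map ^^ n) (x, y) = (hom_eval d cX x y 1 / hom_eval d cZ x y 1, hom_eval d cY x y 1 / hom_eval d cZ x y 1))"
    using assms unfolding hom_repr_def by blast
  define hx where "hx p = hom_eval d cX (fst p) (snd p) 1" for p
  define hy where "hy p = hom_eval d cY (fst p) (snd p) 1" for p
  define hz where "hz p = hom_eval d cZ (fst p) (snd p) 1" for p
  define Q where "Q p = (hx p)\<^sup>2 - hx p * hy p - 2 * (hy p)\<^sup>2 - (hz p)\<^sup>2" for p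
  have "holds_generically (\<lambda>p. (hz p \<noteq> 0 \<and> (F_map ^^ n) p = (hx p / hz p, hy p / hz p))
      \<and> (p \<in> varpi_dom \<and> varpi p \<in> iter_dom n) \<and> (fst p)\<^sup>2 \<noteq> 1)"
    using H unfolding hx_def hy_def hz_def
    by (intro holds_generically_conj holds_generically_fst_sq_ne_one
        holds_generically_pullback_varpi holds_generically_iter_dom)
       (auto elim: holds_generically_mono)
  then obtain U where U: "open U" "closure U = UNIV"
    "\<And>p. p \<in> U \<Longrightarrow> hz p \<noteq> 0 \<and> (F_map ^^ n) p = (hx p / hz p, hy p / hz p)
       \<and> p \<in> varpi_dom \<and> varpi p \<in> iter_dom n \<and> (fst p)\<^sup>2 \<noteq> 1"
    unfolding holds_generically_def by blast
  have onU: "hy p \<noteq> 0 \<and> Q p * y_pow n p = Phi n p * hy p * hz p" if "p \<in> U" for p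
    using psi_F_map_iter_homogeneous[of p n "hz p" "hx p" "hy p"] U(3)[OF that] unfolding Q_def by simp
  have "closed {p. Q p * y_pow n p = Phi n p * hy p * hz p}"
    unfolding Q_def hx_def hy_def hz_def y_pow_def
    by (intro closed_Collect_eq continuous_intros continuous_on_hom_eval continuous_on_bipoly_le[OF bipoly_le_Phi])
  moreover have "U \<subseteq> {p. Q p * y_pow n p = Phi n p * hy p * hz p}" using onU by blast
  ultimately have "closure U \<subseteq> {p. Q p * y_pow n p = Phi n p * hy p * hz p}"
    by (simp add: closure_minimal)
  hence all: "Q p * y_pow n p = Phi n p * hy p * hz p" for p using U(2) by blast
  have "Q (x, y) * y ^ 2 ^ n = Phi n (x, y) * hy (x, y) * hz (x, y)" for x y
    using all[of "(x, y)"] by (simp add: y_pow_def)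
  moreover have "U \<noteq> {}" using U(2) by auto
  then obtain p0 where "p0 \<in> U" by blast
  ultimately show ?thesis using that[of cX cY cZ "fst p0" "snd p0"] U(3) onU
    unfolding Q_def hx_def hy_def hz_def by auto
qed

lemma hom_repr_F_map_iter_lower:
  assumes "hom_repr d (F_map ^^ n)"
  shows "2 ^ n \<le> 2 * d"
proof -
  obtain cX cY cZ \<alpha> t0 where ident: "\<And>x y. ((hom_eval d cX x y 1)\<^sup>2 - hom_eval d cX x y 1 * hom_eval d cY x y 1
      - 2 * (hom_eval d cY x y 1)\<^sup>2 - (hom_eval d cZ x y 1)\<^sup>2) * y ^ 2 ^ n
      = Phi n (x, y) * hom_eval d cY x y 1 * hom_eval d cZ x y 1"
    and \<alpha>: "\<alpha>\<^sup>2 \<noteq> 1" "hom_eval d cY \<alpha> t0 1 \<noteq> 0" "hom_eval d cZ \<alpha> t0 1 \<noteq> 0"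
    using hom_repr_F_map_iter_identity[OF assms] by blast
  obtain qx where qx: "\<forall>t. hom_eval d cX \<alpha> t 1 = poly qx t" using hom_eval_vertical_line by blast
  obtain qy where qy: "degree qy \<le> d" "\<forall>t. hom_eval d cY \<alpha> t 1 = poly qy t" using hom_eval_vertical_line by blast
  obtain qz where qz: "degree qz \<le> d" "\<forall>t. hom_eval d cZ \<alpha> t 1 = poly qz t" using hom_eval_vertical_line by blast
  obtain qP where qP: "\<forall>t. Phi n (\<alpha>, t) = poly qP t" using bipoly_le_vertical_line[OF bipoly_le_Phi] by blast
  have "poly ((qx\<^sup>2 - qx * qy - smult 2 (qy\<^sup>2) - qz\<^sup>2) * monom 1 (2 ^ n)) t = poly (qP * (qy * qz)) t"
    for t using ident[of \<alpha> t] unfolding qx[rule_format] qy(2)[rule_format] qz(2)[rule_format] qP[rule_format]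
    by (simp add: poly_monom mult.assoc)
  hence eq: "(qx\<^sup>2 - qx * qy - smult 2 (qy\<^sup>2) - qz\<^sup>2) * monom 1 (2 ^ n) = qP * (qy * qz)"
    by (simp add: poly_eq_poly_eq_iff[symmetric] fun_eq_iff)
  have "poly qP 0 = (\<alpha>\<^sup>2 - 1) ^ 2 ^ n" using qP[rule_format, of 0] Phi_snd_zero[of n \<alpha>] by simp
  hence "poly qP 0 \<noteq> 0" using \<alpha>(1) by simp
  moreover have "qy \<noteq> 0" "qz \<noteq> 0" using \<alpha>(2,3) qy(2) qz(2) by auto
  hence "qy * qz \<noteq> 0" by simp
  ultimately have "2 ^ n \<le> degree (qy * qz)" by (rule order_zero_le_degree[OF eq])
  also have "\<dots> \<le> 2 * d" using qy(1) qz(1) degree_mult_le[of qy qz] by linarith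
  finally show ?thesis .
qed

lemma LIMSEQ_root_of_exponential_bounds:
  fixes a :: "nat \<Rightarrow> real"
  assumes "0 < c" "0 \<le> b" and bounds: "\<And>n. c * b ^ n \<le> a n" "\<And>n. a n \<le> C * b ^ n"
  shows "(\<lambda>n. root n (a n)) \<longlonglongrightarrow> b"
proof (rule tendsto_sandwich[where f = "\<lambda>n. root n c * b" and h = "\<lambda>n. root n C * b"])
  have "c \<le> C" using bounds[of 0] by simp
  hence "0 < C" using assms(1) by simp
  have root_eq: "root n (c * b ^ n) = root n c * b" if "0 < n" for c n
    using that assms(2) by (simp add: real_root_mult real_root_power_cancel)
  show "\<forall>\<^sub>F n in sequentially. root n c * b \<le> root n (a n)"
    using bounds(1) by (intro eventually_sequentiallyI[of 1]) (simp add: root_eq[symmetric] real_root_le_iff)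
  show "\<forall>\<^sub>F n in sequentially. root n (a n) \<le> root n C * b"
    using bounds(2) by (intro eventually_sequentiallyI[of 1]) (simp add: root_eq[symmetric] real_root_le_iff)
  show "(\<lambda>n. root n c * b) \<longlonglongrightarrow> b" "(\<lambda>n. root n C * b) \<longlonglongrightarrow> b"
    using tendsto_mult_right[OF LIMSEQ_root_const, of _ b] assms(1) \<open>0 < C\<close> by auto
qed

lemma dynamical_degree_F_map: "(\<lambda>n. root n (real (alg_deg (F_map ^^ n)))) \<longlonglongrightarrow> 2"
proof (rule LIMSEQ_root_of_exponential_bounds[where c = "1 / 2" and C = 64])
  fix n
  have "2 ^ n \<le> 2 * alg_deg (F_map ^^ n)"
    by (rule hom_repr_F_map_iter_lower[OF hom_repr_alg_deg[OF hom_repr_F_map_iter]])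
  hence "(2::real) ^ n \<le> 2 * real (alg_deg (F_map ^^ n))" by (metis of_nat_le_iff of_nat_mult of_nat_numeral of_nat_power)
  thus "1 / 2 * 2 ^ n \<le> real (alg_deg (F_map ^^ n))" by simp
  have "alg_deg (F_map ^^ n) \<le> 64 * 2 ^ n"
    using alg_deg_le[OF hom_repr_F_map_iter[of n]] by (simp add: power_add mult.commute)
  thus "real (alg_deg (F_map ^^ n)) \<le> 64 * 2 ^ n" by (metis of_nat_le_iff of_nat_mult of_nat_numeral of_nat_power)
qed simp_all

theorem theorem7p1:
  shows "holds_generically (\<lambda>p. varpi (varpi_inv p) = p)
       \<and> holds_generically (\<lambda>p. varpi_inv (varpi p) = p)
       \<and> holds_generically (\<lambda>p. varpi (F_map (varpi_inv p)) = G_map p)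
       \<and> holds_generically (\<lambda>p. psi (F_map p) = g_map (psi p))
       \<and> holds_generically (\<lambda>p. card {q \<in> F_dom. F_map q = p} = 2)
       \<and> (\<lambda>n. root n (real (alg_deg (F_map ^^ n)))) \<longlonglongrightarrow> 2"
proof (intro conjI)
  show "holds_generically (\<lambda>p. varpi (varpi_inv p) = p)"
    using open_varpi_inv_dom dense_varpi_inv_dom varpi_varpi_inv unfolding holds_generically_def by blast
  show "holds_generically (\<lambda>p. varpi_inv (varpi p) = p)"
    using open_varpi_dom dense_varpi_dom varpi_inv_varpi unfolding holds_generically_def by blast
  show "holds_generically (\<lambda>p. varpi (F_map (varpi_inv p)) = G_map p)"
    using holds_generically_conj_dom by (rule holds_generically_mono) (rule varpi_F_map_varpi_inv)
  show "holds_generically (\<lambda>p. psi (F_map p) = g_map (psi p))"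
    by (rule holds_generically_psi_F_map)
  show "holds_generically (\<lambda>p. card {q \<in> F_dom. F_map q = p} = 2)"
    using holds_generically_pullback_varpi[OF holds_generically_two_to_one_dom]
    by (rule holds_generically_mono) (simp add: card_F_map_fibre)
  show "(\<lambda>n. root n (real (alg_deg (F_map ^^ n)))) \<longlonglongrightarrow> 2"
    by (rule dynamical_degree_F_map)
qed

end
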